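(* Let $X_1=X_2=X_3=\mathbb{N}$ (discrete topology). For $n\in\mathbb{N}$ let $A_n=\{(n+1,n,n),(n,n+1,n),(n,n,n+1)\}$. Let $\mu_p$ be the probability measure on $\mathbb{N}^3$ with $\mu_p(x)=\frac{2}{(\pi n)^2}$ if $x\in A_n$ and $\mu_p(x)=0$ if $x\notin\bigcup_nA_n$, and let $\mu_\varepsilon(n_1,n_2,n_3)=2^{-n_1-n_2-n_3}$. Let $c:\mathbb{N}^3\to\{0,1\}$, $c=1$ on $\bigcup_nA_n$ and $c=0$ elsewhere. Then there exists $\alpha_0\in(0,1)$ such that for $\mu=(1-\alpha_0)\mu_p+\alpha_0\mu_\varepsilon$ and $\mu_{ij}=\mathrm{Pr}_{ij}(\mu)$: (i) $\mu$ is equivalent but not uniformly equivalent to $\mu_1\otimes\mu_2\otimes\mu_3$, where $\mu_i=\mathrm{Pr}_i(\mu)$; (ii) there is no tuple of functions $f_{ij}:\mathbb{N}^2\to[-\infty,+\infty)$, $f_{ij}\in L^1(\mu_{ij})$, with $f_{12}(n_1,n_2)+f_{13}(n_1,n_3)+f_{23}(n_2,n_3)\le c(n_1,n_2,n_3)$ for all $(n_1,n_2,n_3)$ that attains the supremum of $\sum_{i<j}\int f_{ij}\,d\mu_{ij}$ over all such tuples; i.e. the dual $(3,2)$-problem has no solution.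
   Context: $\mathrm{Pr}_{ij}$ and $\mathrm{Pr}_i$ denote the coordinate projections of $\mathbb{N}^3$ onto $\mathbb{N}^2$ (coordinates $i,j$) and onto $\mathbb{N}$ (coordinate $i$). Two measures are equivalent if mutually absolutely continuous, and uniformly equivalent if one has a density with respect to the other bounded above and below by positive constants. *)

theory Defs
  imports "HOL-Analysis.Analysis"
begin

text \<open>Here \<open>\<nat>\<close> of the paper is the set of positive integers (so that
  \<open>\<mu>\<^sub>p\<close> and \<open>\<mu>\<^sub>\<epsilon>\<close> are probability measures).
  We work on the type \<open>nat \<times> nat \<times> nat\<close> with the discrete (counting)
  sigma-algebra; all measures below give zero mass to points with a zero coordinate.\<close>

definition pos3 :: "(nat \<times> nat \<times> nat) set" where
  "pos3 = {(a,b,c). a \<ge> 1 \<and> b \<ge> 1 \<and> c \<ge> 1}"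

definition A :: "nat \<Rightarrow> (nat \<times> nat \<times> nat) set" where
  "A n = {(n+1, n, n), (n, n+1, n), (n, n, n+1)}"

text \<open>point weights of \<open>\<mu>\<^sub>p\<close>: \<open>2/(\<pi> n)\<^sup>2\<close> on \<open>A n\<close> (n \<ge> 1), 0 off \<open>\<Union>\<^sub>n A n\<close>
  (the sets \<open>A n\<close> are pairwise disjoint, so the sum has at most one term)\<close>
definition wp :: "nat \<times> nat \<times> nat \<Rightarrow> real" where
  "wp x = (\<Sum>n\<in>{n. n \<ge> 1 \<and> x \<in> A n}. 2 / (pi * real n)^2)"

definition weps :: "nat \<times> nat \<times> nat \<Rightarrow> real" where
  "weps x = (if x \<in> pos3 then (case x of (n1,n2,n3) \<Rightarrow> 2 powr (- real (n1+n2+n3))) else 0)"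

definition mu_p :: "(nat \<times> nat \<times> nat) measure" where
  "mu_p = density (count_space UNIV) (\<lambda>x. ennreal (wp x))"

definition mu_eps :: "(nat \<times> nat \<times> nat) measure" where
  "mu_eps = density (count_space UNIV) (\<lambda>x. ennreal (weps x))"

definition mu_mix :: "real \<Rightarrow> (nat \<times> nat \<times> nat) measure" where
  "mu_mix \<alpha> = density (count_space UNIV) (\<lambda>x. ennreal ((1 - \<alpha>) * wp x + \<alpha> * weps x))"

definition cost :: "nat \<times> nat \<times> nat \<Rightarrow> ereal" where
  "cost x = (if \<exists>n\<ge>1. x \<in> A n then 1 else 0)"

definition pr1 :: "nat \<times> nat \<times> nat \<Rightarrow> nat" where "pr1 x = fst x"
definition pr2 :: "nat \<times> nat \<times> nat \<Rightarrow> nat" where "pr2 x = fst (snd x)"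
definition pr3 :: "nat \<times> nat \<times> nat \<Rightarrow> nat" where "pr3 x = snd (snd x)"
definition pr12 :: "nat \<times> nat \<times> nat \<Rightarrow> nat \<times> nat" where "pr12 x = (pr1 x, pr2 x)"
definition pr13 :: "nat \<times> nat \<times> nat \<Rightarrow> nat \<times> nat" where "pr13 x = (pr1 x, pr3 x)"
definition pr23 :: "nat \<times> nat \<times> nat \<Rightarrow> nat \<times> nat" where "pr23 x = (pr2 x, pr3 x)"

definition marg1 :: "(nat \<times> nat \<times> nat) measure \<Rightarrow> nat measure" where
  "marg1 M = distr M (count_space UNIV) pr1"
definition marg2 :: "(nat \<times> nat \<times> nat) measure \<Rightarrow> nat measure" where
  "marg2 M = distr M (count_space UNIV) pr2"
definition marg3 :: "(nat \<times> nat \<times> nat) measure \<Rightarrow> nat measure" where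
  "marg3 M = distr M (count_space UNIV) pr3"
definition marg12 :: "(nat \<times> nat \<times> nat) measure \<Rightarrow> (nat \<times> nat) measure" where
  "marg12 M = distr M (count_space UNIV) pr12"
definition marg13 :: "(nat \<times> nat \<times> nat) measure \<Rightarrow> (nat \<times> nat) measure" where
  "marg13 M = distr M (count_space UNIV) pr13"
definition marg23 :: "(nat \<times> nat \<times> nat) measure \<Rightarrow> (nat \<times> nat) measure" where
  "marg23 M = distr M (count_space UNIV) pr23"

definition equiv_measures :: "'a measure \<Rightarrow> 'a measure \<Rightarrow> bool" where
  "equiv_measures M N \<longleftrightarrow> absolutely_continuous M N \<and> absolutely_continuous N M"

definition bounded_density :: "'a measure \<Rightarrow> 'a measure \<Rightarrow> bool" where
  "bounded_density M N \<longleftrightarrow> (\<exists>g a b. 0 < a \<and> a \<le> b \<and> g \<in> borel_measurable N \<and>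
      (\<forall>x\<in>space N. a \<le> g x \<and> g x \<le> b) \<and> M = density N (\<lambda>x. ennreal (g x)))"

definition unif_equiv_measures :: "'a measure \<Rightarrow> 'a measure \<Rightarrow> bool" where
  "unif_equiv_measures M N \<longleftrightarrow> bounded_density M N \<or> bounded_density N M"

definition ereal_L1 :: "'a measure \<Rightarrow> ('a \<Rightarrow> ereal) \<Rightarrow> bool" where
  "ereal_L1 M f \<longleftrightarrow> f \<in> borel_measurable M \<and> (\<forall>x\<in>space M. f x \<noteq> \<infinity>) \<and>
      (\<integral>\<^sup>+ x. e2ennreal \<bar>f x\<bar> \<partial>M) < \<infinity>"

text \<open>integral of such a function (finite a.e., so the real part suffices)\<close>
definition ereal_int :: "'a measure \<Rightarrow> ('a \<Rightarrow> ereal) \<Rightarrow> real" where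
  "ereal_int M f = integral\<^sup>L M (\<lambda>x. real_of_ereal (f x))"

definition dual_admissible ::
  "(nat \<times> nat \<times> nat) measure \<Rightarrow> (nat \<times> nat \<Rightarrow> ereal) \<Rightarrow> (nat \<times> nat \<Rightarrow> ereal) \<Rightarrow> (nat \<times> nat \<Rightarrow> ereal) \<Rightarrow> bool" where
  "dual_admissible M f12 f13 f23 \<longleftrightarrow>
     ereal_L1 (marg12 M) f12 \<and> ereal_L1 (marg13 M) f13 \<and> ereal_L1 (marg23 M) f23 \<and>
     (\<forall>n1 n2 n3. (n1, n2, n3) \<in> pos3 \<longrightarrow> f12 (n1, n2) + f13 (n1, n3) + f23 (n2, n3) \<le> cost (n1, n2, n3))"

definition dual_value ::
  "(nat \<times> nat \<times> nat) measure \<Rightarrow> (nat \<times> nat \<Rightarrow> ereal) \<Rightarrow> (nat \<times> nat \<Rightarrow> ereal) \<Rightarrow> (nat \<times> nat \<Rightarrow> ereal) \<Rightarrow> real" where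
  "dual_value M f12 f13 f23 = ereal_int (marg12 M) f12 + ereal_int (marg13 M) f13 + ereal_int (marg23 M) f23"

end

theory Submission
  imports Defs
begin

text \<open>
  Both \<open>\<mu>\<close> and the product \<open>\<nu>\<close> of its one-dimensional marginals charge exactly the points
  with positive coordinates, so they are equivalent. At \<open>(n, n, n+1)\<close> the \<open>\<mu>\<close>-mass is of
  order \<open>n\<^sup>-\<^sup>2\<close>, whereas each marginal gives mass \<open>O(n\<^sup>-\<^sup>2)\<close> to a coordinate near \<open>n\<close>,
  so \<open>\<nu>\<close> gives this point mass \<open>O(n\<^sup>-\<^sup>6)\<close>; hence no density is bounded.

  Suppose \<open>(f\<^sub>1\<^sub>2, f\<^sub>1\<^sub>3, f\<^sub>2\<^sub>3)\<close> maximizes the dual problem and write \<open>G\<close> for the sum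
  \<open>f\<^sub>1\<^sub>2 + f\<^sub>1\<^sub>3 + f\<^sub>2\<^sub>3\<close> on triples. Then \<open>G = 1\<close> on every \<open>A n\<close>: otherwise a local
  perturbation raises \<open>G\<close> at a point of \<open>A n\<close> at the expense of two points of \<open>A (n+1)\<close> and of
  a set of tiny \<open>\<mu>\<^sub>\<epsilon>\<close>-mass, a net gain because \<open>\<mu>\<^sub>p\<close> decreases from \<open>A n\<close> to
  \<open>A (n+1)\<close>. On the unit cube at \<open>(n, n, n)\<close> the four corners with an odd and the four
  with an even number of raised coordinates carry the same total of \<open>G\<close>; three of the former lie
  in \<open>A n\<close>, and three of the latter lie outside \<open>\<Union>A\<close>, where \<open>G \<le> 0\<close>. So \<open>G (n, n, n)\<close> decreases by at least \<open>3\<close> at each step,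
  the pair functions grow linearly on the diagonal, and since the two-dimensional marginals
  give \<open>(n, n)\<close> mass of order \<open>n\<^sup>-\<^sup>2\<close>, they cannot be integrable.
\<close>

section \<open>The weights of \<open>\<mu>\<close>\<close>

text \<open>Any sufficiently small weight works; it only has to make \<open>bump_gain\<close> below hold.\<close>
definition alpha0 :: real where "alpha0 = 1/1000"

definition geom :: "nat \<Rightarrow> real" where "geom k = (if 1 \<le> k then (1/2)^k else 0)"

definition pmass :: "nat \<Rightarrow> real" where "pmass n = 2 / (pi * real n)^2"

definition wmix :: "nat \<times> nat \<times> nat \<Rightarrow> real" where
  "wmix x = (1 - alpha0) * wp x + alpha0 * weps x"

abbreviation mu :: "(nat \<times> nat \<times> nat) measure" where "mu \<equiv> mu_mix alpha0"

lemma alpha0_pos: "0 < alpha0" and alpha0_less_1: "alpha0 < 1"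
  by (simp_all add: alpha0_def)

lemma mem_A_iff: "x \<in> A m \<longleftrightarrow> x = (m+1, m, m) \<or> x = (m, m+1, m) \<or> x = (m, m, m+1)"
  by (auto simp: A_def)

lemma A_inj: "x \<in> A m \<Longrightarrow> x \<in> A m' \<Longrightarrow> m = m'"
  by (auto simp: A_def)

lemma finite_A [simp]: "finite (A m)"
  by (simp add: A_def)

lemma card_A_Int_le: "card (A m \<inter> E) \<le> 3"
proof -
  have "card (A m \<inter> E) \<le> card (A m)" by (intro card_mono) auto
  also have "\<dots> \<le> 3" by (auto simp: A_def card_insert_if)
  finally show ?thesis .
qed

lemma of_nat_card_A_Int_le: "(of_nat (card (A m \<inter> E)) :: ennreal) \<le> 3"
  using card_A_Int_le[of m E] by (metis of_nat_le_iff of_nat_numeral)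

lemma A_subset_pos3: "1 \<le> m \<Longrightarrow> A m \<subseteq> pos3"
  by (auto simp: A_def pos3_def)

lemma wp_A: "1 \<le> n \<Longrightarrow> x \<in> A n \<Longrightarrow> wp x = pmass n"
proof -
  assume "1 \<le> n" "x \<in> A n"
  then have "{m. 1 \<le> m \<and> x \<in> A m} = {n}" using A_inj by blast
  then show ?thesis by (simp add: wp_def pmass_def)
qed

lemma wp_outside_A: "(\<And>m. 1 \<le> m \<Longrightarrow> x \<notin> A m) \<Longrightarrow> wp x = 0"
  unfolding wp_def by (metis (mono_tags, lifting) empty_Collect_eq sum.empty)

lemma wp_nonneg: "0 \<le> wp x"
  unfolding wp_def by (intro sum_nonneg) auto

lemma geom_nonneg: "0 \<le> geom k"
  by (simp add: geom_def)

lemma weps_product: "weps (a, b, c) = geom a * geom b * geom c"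
proof -
  have "(2::real) powr (real (a+b+c)) = 2^(a+b+c)"
    by (rule powr_realpow) simp
  then have "(2::real) powr (- real (a+b+c)) = inverse (2^(a+b+c))"
    by (simp only: powr_minus)
  also have "\<dots> = (1/2)^a * (1/2)^b * (1/2)^c"
    by (simp add: power_add power_one_over inverse_eq_divide)
  finally have "(2::real) powr (- real (a+b+c)) = (1/2)^a * (1/2)^b * (1/2)^c" .
  then show ?thesis by (simp add: weps_def geom_def pos3_def)
qed

lemma weps_nonneg: "0 \<le> weps x"
  by (cases x) (simp add: weps_product geom_nonneg)

lemma weps_pos: "x \<in> pos3 \<Longrightarrow> 0 < weps x"
  by (cases x) (auto simp: weps_product pos3_def geom_def)

lemma wp_weps_outside_pos3: "x \<notin> pos3 \<Longrightarrow> wp x = 0 \<and> weps x = 0"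
  by (auto simp: weps_def A_def pos3_def intro!: wp_outside_A)

lemma wmix_nonneg: "0 \<le> wmix x"
  using wp_nonneg weps_nonneg alpha0_pos alpha0_less_1 by (simp add: wmix_def)

lemma wmix_le: "wmix x \<le> wp x + weps x"
  using wp_nonneg weps_nonneg alpha0_pos alpha0_less_1 unfolding wmix_def
  by (smt (verit) mult_left_le_one_le)

lemma wmix_pos_iff: "0 < wmix x \<longleftrightarrow> x \<in> pos3"
proof
  assume "x \<in> pos3"
  then show "0 < wmix x"
    using weps_pos wp_nonneg alpha0_pos alpha0_less_1 unfolding wmix_def
    by (smt (verit) mult_nonneg_nonneg mult_pos_pos)
next
  assume "0 < wmix x"
  then show "x \<in> pos3"
    using wp_weps_outside_pos3[of x] by (cases "x \<in> pos3") (auto simp: wmix_def)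
qed

lemma wmix_A:
  assumes "1 \<le> m" "x \<in> A m"
  shows "wmix x = (1 - alpha0) * pmass m + alpha0 * (1/2)^(3*m+1)"
proof -
  have "3*m+1 = (m+1) + m + m" by simp
  then have "(1/2::real)^(3*m+1) = (1/2)^((m+1) + m + m)"
    by (simp only:)
  also have "\<dots> = (1/2)^(m+1) * (1/2)^m * (1/2)^m"
    by (simp only: power_add)
  finally have "(1/2::real)^(3*m+1) = (1/2)^(m+1) * (1/2)^m * (1/2)^m" .
  moreover have "weps x = (1/2)^(m+1) * (1/2)^m * (1/2)^m"
    using assms by (auto simp: A_def weps_product geom_def mult_ac)
  ultimately show ?thesis using wp_A[OF assms] by (simp add: wmix_def)
qed

lemma pmass_le_wmix: "1 \<le> n \<Longrightarrow> x \<in> A n \<Longrightarrow> (1 - alpha0) * pmass n \<le> wmix x"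
  using wmix_A alpha0_pos by simp

lemma mu_eq_density: "mu = density (count_space UNIV) (\<lambda>x. ennreal (wmix x))"
  by (simp add: mu_mix_def wmix_def)

lemma space_mu [simp]: "space mu = UNIV" and sets_mu [simp]: "sets mu = UNIV"
  by (simp_all add: mu_mix_def)

lemma emeasure_mu: "emeasure mu E = (\<integral>\<^sup>+x. ennreal (wmix x) * indicator E x \<partial>count_space UNIV)"
  unfolding mu_eq_density by (subst emeasure_density) auto

lemma emeasure_mu_singleton: "emeasure mu {x} = ennreal (wmix x)"
  by (simp add: emeasure_mu nn_integral_indicator_singleton)

lemma measure_mu_singleton: "measure mu {x} = wmix x"
  by (simp add: measure_def emeasure_mu_singleton wmix_nonneg)

section \<open>Summing the weights\<close>

lemma nn_integral_count_space_triple: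
  fixes u :: "'a \<Rightarrow> ennreal" and v :: "'b \<Rightarrow> ennreal" and z :: "'c \<Rightarrow> ennreal"
  shows "(\<integral>\<^sup>+x. u (fst x) * v (fst (snd x)) * z (snd (snd x)) \<partial>count_space UNIV)
    = (\<integral>\<^sup>+a. u a \<partial>count_space UNIV) * (\<integral>\<^sup>+b. v b \<partial>count_space UNIV) * (\<integral>\<^sup>+c. z c \<partial>count_space UNIV)"
proof -
  have "(\<integral>\<^sup>+x. u (fst x) * v (fst (snd x)) * z (snd (snd x)) \<partial>count_space UNIV)
      = (\<integral>\<^sup>+a. \<integral>\<^sup>+b. \<integral>\<^sup>+c. u a * v b * z c \<partial>count_space UNIV \<partial>count_space UNIV \<partial>count_space UNIV)"
    by (simp flip: nn_integral_fst_count_space)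
  also have "\<dots> = (\<integral>\<^sup>+a. \<integral>\<^sup>+b. u a * v b * (\<integral>\<^sup>+c. z c \<partial>count_space UNIV) \<partial>count_space UNIV \<partial>count_space UNIV)"
    by (simp add: nn_integral_cmult)
  also have "\<dots> = (\<integral>\<^sup>+a. u a * (\<integral>\<^sup>+b. v b \<partial>count_space UNIV) * (\<integral>\<^sup>+c. z c \<partial>count_space UNIV) \<partial>count_space UNIV)"
    by (simp add: nn_integral_multc nn_integral_cmult)
  also have "\<dots> = (\<integral>\<^sup>+a. u a \<partial>count_space UNIV) * (\<integral>\<^sup>+b. v b \<partial>count_space UNIV) * (\<integral>\<^sup>+c. z c \<partial>count_space UNIV)"
    by (simp add: nn_integral_multc)
  finally show ?thesis .
qed

lemma geometric_tail_sums: "(\<lambda>k. (1/2::real)^k * indicator {N..} k) sums (2 * (1/2)^N)"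
proof -
  have "(\<lambda>i. (1/2::real)^(i+N) * indicator {N..} (i+N)) = (\<lambda>i. (1/2)^N * (1/2)^i)"
    by (auto simp: power_add)
  moreover have "(\<lambda>i. (1/2::real)^N * (1/2)^i) sums ((1/2)^N * 2)"
    by (intro sums_mult) (rule geometric_sums[where c="1/2::real", simplified])
  ultimately have "(\<lambda>i. (1/2::real)^(i+N) * indicator {N..} (i+N)) sums (2 * (1/2)^N)"
    by (simp add: mult.commute)
  then show ?thesis
    using sums_iff_shift[of "\<lambda>k. (1/2::real)^k * indicator {N..} k" N] by simp
qed

lemma nn_integral_count_space_sums:
  fixes f :: "nat \<Rightarrow> real"
  assumes "\<And>k. 0 \<le> f k" "f sums s"
  shows "(\<integral>\<^sup>+k. ennreal (f k) \<partial>count_space UNIV) = ennreal s"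
  using assms
  by (simp add: nn_integral_count_space_nat suminf_ennreal2 sums_summable sums_unique[symmetric])

lemma nn_integral_geom: "(\<integral>\<^sup>+k. ennreal (geom k) \<partial>count_space UNIV) = 1"
proof -
  have "geom = (\<lambda>k. (1/2::real)^k * indicator {1..} k)"
    by (auto simp: geom_def fun_eq_iff)
  then have "geom sums 1"
    using geometric_tail_sums[of 1] by simp
  then show ?thesis
    using nn_integral_count_space_sums[OF geom_nonneg] by simp
qed

lemma nn_integral_geom_tail:
  "(\<integral>\<^sup>+k. ennreal (geom k) * indicator {N..} k \<partial>count_space UNIV) \<le> ennreal (2 * (1/2)^N)"
proof -
  have "(\<integral>\<^sup>+k. ennreal (geom k) * indicator {N..} k \<partial>count_space UNIV)
     \<le> (\<integral>\<^sup>+k. ennreal ((1/2::real)^k * indicator {N..} k) \<partial>count_space UNIV)"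
    by (intro nn_integral_mono) (auto simp: geom_def indicator_def)
  also have "\<dots> = ennreal (2 * (1/2)^N)"
    by (rule nn_integral_count_space_sums[OF _ geometric_tail_sums]) simp
  finally show ?thesis .
qed

lemma ennreal_weps:
  "ennreal (weps x) = ennreal (geom (fst x)) * ennreal (geom (fst (snd x))) * ennreal (geom (snd (snd x)))"
  by (cases x) (simp add: weps_product geom_nonneg ennreal_mult)

lemma nn_integral_weps_coordinate:
  "(\<integral>\<^sup>+x. ennreal (weps x) * indicator (pr1 -` S) x \<partial>count_space UNIV)
     = (\<integral>\<^sup>+k. ennreal (geom k) * indicator S k \<partial>count_space UNIV)"
  "(\<integral>\<^sup>+x. ennreal (weps x) * indicator (pr2 -` S) x \<partial>count_space UNIV)
     = (\<integral>\<^sup>+k. ennreal (geom k) * indicator S k \<partial>count_space UNIV)"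
  "(\<integral>\<^sup>+x. ennreal (weps x) * indicator (pr3 -` S) x \<partial>count_space UNIV)
     = (\<integral>\<^sup>+k. ennreal (geom k) * indicator S k \<partial>count_space UNIV)"
proof -
  let ?g = "\<lambda>k. ennreal (geom k)" and ?gS = "\<lambda>k. ennreal (geom k) * indicator S k"
  have "(\<integral>\<^sup>+x. ennreal (weps x) * indicator (pr1 -` S) x \<partial>count_space UNIV)
     = (\<integral>\<^sup>+x. ?gS (fst x) * ?g (fst (snd x)) * ?g (snd (snd x)) \<partial>count_space UNIV)"
    by (intro nn_integral_cong) (simp add: ennreal_weps pr1_def indicator_def)
  also have "\<dots> = integral\<^sup>N (count_space UNIV) ?gS * integral\<^sup>N (count_space UNIV) ?g * integral\<^sup>N (count_space UNIV) ?g"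
    by (rule nn_integral_count_space_triple)
  finally show "(\<integral>\<^sup>+x. ennreal (weps x) * indicator (pr1 -` S) x \<partial>count_space UNIV) = integral\<^sup>N (count_space UNIV) ?gS"
    by (simp only: nn_integral_geom mult_1_right)
  have "(\<integral>\<^sup>+x. ennreal (weps x) * indicator (pr2 -` S) x \<partial>count_space UNIV)
     = (\<integral>\<^sup>+x. ?g (fst x) * ?gS (fst (snd x)) * ?g (snd (snd x)) \<partial>count_space UNIV)"
    by (intro nn_integral_cong) (simp add: ennreal_weps pr2_def indicator_def)
  also have "\<dots> = integral\<^sup>N (count_space UNIV) ?g * integral\<^sup>N (count_space UNIV) ?gS * integral\<^sup>N (count_space UNIV) ?g"
    by (rule nn_integral_count_space_triple)
  finally show "(\<integral>\<^sup>+x. ennreal (weps x) * indicator (pr2 -` S) x \<partial>count_space UNIV) = integral\<^sup>N (count_space UNIV) ?gS"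
    by (simp only: nn_integral_geom mult_1_right mult_1_left)
  have "(\<integral>\<^sup>+x. ennreal (weps x) * indicator (pr3 -` S) x \<partial>count_space UNIV)
     = (\<integral>\<^sup>+x. ?g (fst x) * ?g (fst (snd x)) * ?gS (snd (snd x)) \<partial>count_space UNIV)"
    by (intro nn_integral_cong) (simp add: ennreal_weps pr3_def indicator_def)
  also have "\<dots> = integral\<^sup>N (count_space UNIV) ?g * integral\<^sup>N (count_space UNIV) ?g * integral\<^sup>N (count_space UNIV) ?gS"
    by (rule nn_integral_count_space_triple)
  finally show "(\<integral>\<^sup>+x. ennreal (weps x) * indicator (pr3 -` S) x \<partial>count_space UNIV) = integral\<^sup>N (count_space UNIV) ?gS"
    by (simp only: nn_integral_geom mult_1_left)
qed

lemma nn_integral_weps: "(\<integral>\<^sup>+x. ennreal (weps x) \<partial>count_space UNIV) = 1"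
  using nn_integral_weps_coordinate(1)[of UNIV] by (simp add: nn_integral_geom)

definition beyond :: "nat \<Rightarrow> (nat \<times> nat \<times> nat) set" where
  "beyond N = pr1 -` {N..} \<union> pr2 -` {N..} \<union> pr3 -` {N..}"

lemma nn_integral_weps_beyond:
  "(\<integral>\<^sup>+x. ennreal (weps x) * indicator (beyond N) x \<partial>count_space UNIV) \<le> ennreal (6 * (1/2)^N)"
proof -
  let ?I = "\<lambda>S x. ennreal (weps x) * indicator S x"
  have "(\<integral>\<^sup>+x. ?I (beyond N) x \<partial>count_space UNIV)
     \<le> (\<integral>\<^sup>+x. ?I (pr1 -` {N..}) x + ?I (pr2 -` {N..}) x + ?I (pr3 -` {N..}) x \<partial>count_space UNIV)"
    by (intro nn_integral_mono) (auto simp: beyond_def indicator_def)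
  also have "\<dots> = (\<integral>\<^sup>+x. ?I (pr1 -` {N..}) x \<partial>count_space UNIV) + (\<integral>\<^sup>+x. ?I (pr2 -` {N..}) x \<partial>count_space UNIV)
      + (\<integral>\<^sup>+x. ?I (pr3 -` {N..}) x \<partial>count_space UNIV)"
    by (simp add: nn_integral_add)
  also have "\<dots> \<le> ennreal (2 * (1/2)^N) + ennreal (2 * (1/2)^N) + ennreal (2 * (1/2)^N)"
    unfolding nn_integral_weps_coordinate by (intro add_mono nn_integral_geom_tail)
  also have "\<dots> = ennreal (6 * (1/2)^N)"
    by (simp flip: ennreal_plus)
  finally show ?thesis .
qed

lemma pmass_eq: "pmass m = (2/pi^2) * inverse (real m ^ 2)"
  by (simp add: pmass_def power_mult_distrib divide_inverse)

lemma summable_pmass: "summable pmass"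
  unfolding pmass_eq[abs_def] by (intro summable_mult inverse_power_summable) simp

lemma pmass_nonneg: "0 \<le> pmass m"
  by (simp add: pmass_def)

text \<open>Since \<open>pmass 0 = 0\<close> (division by zero), the sets \<open>A 0\<close> do no harm here.\<close>
lemma ennreal_wp_suminf: "ennreal (wp x) = (\<Sum>m. ennreal (pmass m * indicator (A m) x))"
proof (cases "\<exists>n\<ge>1. x \<in> A n")
  case True
  then obtain n where n: "1 \<le> n" "x \<in> A n" by blast
  have "(\<Sum>m. ennreal (pmass m * indicator (A m) x)) = (\<Sum>m\<in>{n}. ennreal (pmass m * indicator (A m) x))"
    by (rule suminf_finite) (auto simp: indicator_def dest: A_inj[OF n(2)])
  then show ?thesis using n by (simp add: wp_A)
next
  case False
  then have "(\<lambda>m. ennreal (pmass m * indicator (A m) x)) = (\<lambda>m. 0)"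
    by (auto simp: fun_eq_iff indicator_def pmass_def not_less_eq_eq)
  then show ?thesis using False by (simp add: wp_outside_A)
qed

lemma nn_integral_wp:
  "(\<integral>\<^sup>+x. ennreal (wp x) * indicator E x \<partial>count_space UNIV) = (\<Sum>m. ennreal (pmass m) * of_nat (card (A m \<inter> E)))"
proof -
  have "(\<integral>\<^sup>+x. ennreal (wp x) * indicator E x \<partial>count_space UNIV)
     = (\<Sum>m. \<integral>\<^sup>+x. ennreal (pmass m * indicator (A m) x) * indicator E x \<partial>count_space UNIV)"
    by (simp add: ennreal_wp_suminf nn_integral_suminf flip: ennreal_suminf_multc)
  also have "\<dots> = (\<Sum>m. \<integral>\<^sup>+x. ennreal (pmass m) * indicator (A m \<inter> E) x \<partial>count_space UNIV)"
    by (intro suminf_cong nn_integral_cong) (auto simp: indicator_def)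
  also have "\<dots> = (\<Sum>m. ennreal (pmass m) * of_nat (card (A m \<inter> E)))"
    by (simp add: nn_integral_cmult_indicator emeasure_count_space_finite)
  finally show ?thesis .
qed

lemma emeasure_mu_finite: "emeasure mu E < \<infinity>"
proof -
  have "emeasure mu E \<le> (\<integral>\<^sup>+x. ennreal (wp x) + ennreal (weps x) \<partial>count_space UNIV)"
    unfolding emeasure_mu
    by (intro nn_integral_mono) (auto simp: indicator_def wmix_le wp_nonneg weps_nonneg simp flip: ennreal_plus)
  also have "\<dots> = (\<Sum>m. ennreal (pmass m) * of_nat (card (A m))) + 1"
    using nn_integral_wp[of UNIV] by (simp add: nn_integral_add nn_integral_weps)
  also have "\<dots> \<le> (\<Sum>m. ennreal (pmass m) * 3) + 1"
    using of_nat_card_A_Int_le[of _ UNIV] by (intro add_mono suminf_le mult_left_mono) auto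
  also have "\<dots> = ennreal (suminf pmass) * 3 + 1"
    by (simp add: ennreal_suminf_multc suminf_ennreal2 pmass_nonneg summable_pmass)
  also have "\<dots> < \<infinity>"
    by (simp add: ennreal_mult_less_top)
  finally show ?thesis .
qed

lemma finite_measure_mu: "finite_measure mu"
  by (rule finite_measureI) (use emeasure_mu_finite[of UNIV] in simp)

section \<open>Marginals\<close>

lemma measurable_discrete: "sets M = UNIV \<Longrightarrow> space N = UNIV \<Longrightarrow> f \<in> measurable M N"
  unfolding measurable_def by auto

lemma borel_measurable_discrete: "sets M = UNIV \<Longrightarrow> f \<in> borel_measurable M"
  by (rule measurable_discrete) auto

lemma space_eq_UNIV_if_sets_eq_UNIV: "sets M = UNIV \<Longrightarrow> space M = UNIV"
  using sets.sets_into_space[of "{_}" M] by auto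

lemma pr_simps [simp]:
  "pr1 (a,b,c) = a" "pr2 (a,b,c) = b" "pr3 (a,b,c) = c"
  "pr12 (a,b,c) = (a,b)" "pr13 (a,b,c) = (a,c)" "pr23 (a,b,c) = (b,c)"
  by (simp_all add: pr1_def pr2_def pr3_def pr12_def pr13_def pr23_def)

lemma sets_marg [simp]:
  "sets (marg12 M) = UNIV" "sets (marg13 M) = UNIV" "sets (marg23 M) = UNIV"
  "sets (marg1 M) = UNIV" "sets (marg2 M) = UNIV" "sets (marg3 M) = UNIV"
  by (simp_all add: marg12_def marg13_def marg23_def marg1_def marg2_def marg3_def)

lemma emeasure_marg:
  assumes "sets M = UNIV"
  shows "emeasure (marg12 M) E = emeasure M (pr12 -` E)"
    "emeasure (marg13 M) E = emeasure M (pr13 -` E)"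
    "emeasure (marg23 M) E = emeasure M (pr23 -` E)"
    "emeasure (marg1 M) F = emeasure M (pr1 -` F)"
    "emeasure (marg2 M) F = emeasure M (pr2 -` F)"
    "emeasure (marg3 M) F = emeasure M (pr3 -` F)"
  by (simp_all add: assms space_eq_UNIV_if_sets_eq_UNIV marg12_def marg13_def marg23_def marg1_def marg2_def marg3_def
      emeasure_distr measurable_discrete)

lemma integral_marg:
  fixes h :: "nat \<times> nat \<Rightarrow> real"
  assumes "sets M = UNIV"
  shows "integral\<^sup>L (marg12 M) h = integral\<^sup>L M (\<lambda>x. h (pr12 x))"
    "integral\<^sup>L (marg13 M) h = integral\<^sup>L M (\<lambda>x. h (pr13 x))"
    "integral\<^sup>L (marg23 M) h = integral\<^sup>L M (\<lambda>x. h (pr23 x))"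
  unfolding marg12_def marg13_def marg23_def
  by (rule integral_distr; simp add: assms measurable_discrete borel_measurable_discrete)+

lemma finite_measure_marg:
  assumes "finite_measure M" "sets M = UNIV"
  shows "finite_measure (marg12 M)" "finite_measure (marg13 M)" "finite_measure (marg23 M)"
    "finite_measure (marg1 M)" "finite_measure (marg2 M)" "finite_measure (marg3 M)"
  using assms by (auto intro!: finite_measureI simp: emeasure_marg finite_measure.emeasure_finite)

lemma wmix_le_emeasure_marg:
  "ennreal (wmix (a,b,c)) \<le> emeasure (marg12 mu) {(a,b)}"
  "ennreal (wmix (a,b,c)) \<le> emeasure (marg13 mu) {(a,c)}"
  "ennreal (wmix (a,b,c)) \<le> emeasure (marg23 mu) {(b,c)}"
  "ennreal (wmix (a,b,c)) \<le> emeasure (marg1 mu) {a}"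
  "ennreal (wmix (a,b,c)) \<le> emeasure (marg2 mu) {b}"
  "ennreal (wmix (a,b,c)) \<le> emeasure (marg3 mu) {c}"
  unfolding emeasure_marg[OF sets_mu] emeasure_mu_singleton[symmetric] by (intro emeasure_mono; auto)+

lemma emeasure_marg_singleton_pos:
  assumes "1 \<le> a" "1 \<le> b"
  shows "0 < emeasure (marg12 mu) {(a,b)}" "0 < emeasure (marg13 mu) {(a,b)}"
    "0 < emeasure (marg23 mu) {(a,b)}"
proof -
  have "0 < wmix (a,b,1)" "0 < wmix (a,1,b)" "0 < wmix (1,a,b)"
    using assms by (simp_all add: wmix_pos_iff pos3_def)
  then show "0 < emeasure (marg12 mu) {(a,b)}" "0 < emeasure (marg13 mu) {(a,b)}"
    "0 < emeasure (marg23 mu) {(a,b)}"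
    using wmix_le_emeasure_marg(1)[of a b 1] wmix_le_emeasure_marg(2)[of a 1 b]
      wmix_le_emeasure_marg(3)[of 1 a b]
    by (meson ennreal_less_zero_iff order_less_le_trans)+
qed

section \<open>Integrable functions with values in \<open>[-\<infinity>,\<infinity>)\<close>\<close>

lemma ereal_L1_finite_at_atom:
  assumes L: "ereal_L1 N f" and S: "sets N = UNIV" and p: "0 < emeasure N {p}"
  shows "\<bar>f p\<bar> \<noteq> \<infinity>"
proof
  assume inf: "\<bar>f p\<bar> = \<infinity>"
  have "e2ennreal \<bar>f p\<bar> * emeasure N {p} = (\<integral>\<^sup>+x. e2ennreal \<bar>f p\<bar> * indicator {p} x \<partial>N)"
    using S by (simp add: nn_integral_cmult_indicator)
  also have "\<dots> \<le> (\<integral>\<^sup>+x. e2ennreal \<bar>f x\<bar> \<partial>N)"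
    by (intro nn_integral_mono) (auto simp: indicator_def)
  also have "\<dots> < \<infinity>" using L by (simp add: ereal_L1_def)
  finally show False using inf p by (auto simp: ennreal_top_mult split: if_splits)
qed

lemma ennreal_norm_real_of_ereal_le: "ennreal (norm (real_of_ereal e)) \<le> e2ennreal \<bar>e\<bar>"
  by (cases e) (auto simp: e2ennreal_ereal)

lemma ereal_L1_integrable:
  assumes L: "ereal_L1 N f" and S: "sets N = UNIV"
  shows "integrable N (\<lambda>x. real_of_ereal (f x))"
proof (rule integrableI_bounded)
  show "(\<lambda>x. real_of_ereal (f x)) \<in> borel_measurable N"
    using S by (rule borel_measurable_discrete)
  have "(\<integral>\<^sup>+x. ennreal (norm (real_of_ereal (f x))) \<partial>N) \<le> (\<integral>\<^sup>+x. e2ennreal \<bar>f x\<bar> \<partial>N)"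
    by (intro nn_integral_mono ennreal_norm_real_of_ereal_le)
  also have "\<dots> < \<infinity>" using L by (simp add: ereal_L1_def)
  finally show "(\<integral>\<^sup>+x. ennreal (norm (real_of_ereal (f x))) \<partial>N) < \<infinity>" .
qed

lemma ereal_L1_AE_finite:
  assumes L: "ereal_L1 N f" and S: "sets N = UNIV"
  shows "AE x in N. \<bar>f x\<bar> \<noteq> \<infinity>"
proof -
  have "AE x in N. e2ennreal \<bar>f x\<bar> \<noteq> \<infinity>"
    using L S by (intro nn_integral_PInf_AE borel_measurable_discrete) (auto simp: ereal_L1_def)
  then show ?thesis by eventually_elim (auto simp: e2ennreal_infty)
qed

lemma e2ennreal_abs_add_le: "e2ennreal \<bar>e + ereal h\<bar> \<le> e2ennreal \<bar>e\<bar> + ennreal \<bar>h\<bar>"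
  by (cases e) (auto simp: e2ennreal_ereal simp flip: ennreal_plus intro!: ennreal_leI)

lemma ereal_L1_add_bounded:
  assumes L: "ereal_L1 N f" and S: "sets N = UNIV" and F: "finite_measure N"
    and B: "\<And>x. \<bar>h x\<bar> \<le> B"
  shows "ereal_L1 N (\<lambda>x. f x + ereal (h x))"
    and "ereal_int N (\<lambda>x. f x + ereal (h x)) = ereal_int N f + integral\<^sup>L N h"
proof -
  interpret finite_measure N by (rule F)
  have ih: "integrable N h"
    by (rule integrable_const_bound[where B=B]) (use B S in \<open>auto intro: borel_measurable_discrete\<close>)
  have "(\<integral>\<^sup>+x. e2ennreal \<bar>f x + ereal (h x)\<bar> \<partial>N) \<le> (\<integral>\<^sup>+x. e2ennreal \<bar>f x\<bar> + ennreal \<bar>h x\<bar> \<partial>N)"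
    by (intro nn_integral_mono e2ennreal_abs_add_le)
  also have "\<dots> = (\<integral>\<^sup>+x. e2ennreal \<bar>f x\<bar> \<partial>N) + (\<integral>\<^sup>+x. ennreal \<bar>h x\<bar> \<partial>N)"
    using S by (intro nn_integral_add borel_measurable_discrete) auto
  also have "\<dots> < \<infinity>"
    using L ih by (auto simp: ereal_L1_def integrable_iff_bounded)
  finally show "ereal_L1 N (\<lambda>x. f x + ereal (h x))"
    using L S unfolding ereal_L1_def by (auto intro: borel_measurable_discrete)
  have "ereal_int N (\<lambda>x. f x + ereal (h x)) = integral\<^sup>L N (\<lambda>x. real_of_ereal (f x) + h x)"
    unfolding ereal_int_def
  proof (rule integral_cong_AE)
    show "AE x in N. real_of_ereal (f x + ereal (h x)) = real_of_ereal (f x) + h x"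
      using ereal_L1_AE_finite[OF L S] by eventually_elim (auto simp: real_of_ereal_add)
  qed (use S in \<open>auto intro: borel_measurable_discrete\<close>)
  also have "\<dots> = ereal_int N f + integral\<^sup>L N h"
    unfolding ereal_int_def by (rule Bochner_Integration.integral_add[OF ereal_L1_integrable[OF L S] ih])
  finally show "ereal_int N (\<lambda>x. f x + ereal (h x)) = ereal_int N f + integral\<^sup>L N h" .
qed

section \<open>Improving a dual tuple\<close>

definition pair_sum ::
  "(nat \<times> nat \<Rightarrow> 'b::plus) \<Rightarrow> (nat \<times> nat \<Rightarrow> 'b) \<Rightarrow> (nat \<times> nat \<Rightarrow> 'b) \<Rightarrow> nat \<times> nat \<times> nat \<Rightarrow> 'b" where
  "pair_sum f12 f13 f23 x = f12 (pr12 x) + f13 (pr13 x) + f23 (pr23 x)"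

definition dual_maximizer ::
  "(nat \<times> nat \<times> nat) measure \<Rightarrow> (nat \<times> nat \<Rightarrow> ereal) \<Rightarrow> (nat \<times> nat \<Rightarrow> ereal) \<Rightarrow> (nat \<times> nat \<Rightarrow> ereal) \<Rightarrow> bool" where
  "dual_maximizer M f12 f13 f23 \<longleftrightarrow> dual_admissible M f12 f13 f23 \<and>
     (\<forall>g12 g13 g23. dual_admissible M g12 g13 g23 \<longrightarrow> dual_value M g12 g13 g23 \<le> dual_value M f12 f13 f23)"

lemma pair_sum_le_cost:
  "dual_admissible M f12 f13 f23 \<Longrightarrow> x \<in> pos3 \<Longrightarrow> pair_sum f12 f13 f23 x \<le> cost x"
  by (cases x) (auto simp: dual_admissible_def pair_sum_def)

lemma dual_admissible_add_bounded:
  assumes adm: "dual_admissible M f12 f13 f23" and M: "finite_measure M" "sets M = UNIV"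
    and B: "\<And>p. \<bar>h12 p\<bar> \<le> B" "\<And>p. \<bar>h13 p\<bar> \<le> B" "\<And>p. \<bar>h23 p\<bar> \<le> B"
    and at_x0: "pair_sum f12 f13 f23 x0 + ereal (pair_sum h12 h13 h23 x0) \<le> cost x0"
    and nonpos: "\<And>x. x \<noteq> x0 \<Longrightarrow> pair_sum h12 h13 h23 x \<le> 0"
  shows "dual_admissible M (\<lambda>p. f12 p + ereal (h12 p)) (\<lambda>p. f13 p + ereal (h13 p)) (\<lambda>p. f23 p + ereal (h23 p))"
    and "dual_value M (\<lambda>p. f12 p + ereal (h12 p)) (\<lambda>p. f13 p + ereal (h13 p)) (\<lambda>p. f23 p + ereal (h23 p))
         = dual_value M f12 f13 f23 + integral\<^sup>L M (pair_sum h12 h13 h23)"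
proof -
  interpret finite_measure M by (rule M(1))
  have L: "ereal_L1 (marg12 M) f12" "ereal_L1 (marg13 M) f13" "ereal_L1 (marg23 M) f23"
    using adm by (auto simp: dual_admissible_def)
  have F: "finite_measure (marg12 M)" "finite_measure (marg13 M)" "finite_measure (marg23 M)"
    using finite_measure_marg[OF M] by auto
  note L12 = ereal_L1_add_bounded[OF L(1) sets_marg(1) F(1) B(1)]
  note L13 = ereal_L1_add_bounded[OF L(2) sets_marg(2) F(2) B(2)]
  note L23 = ereal_L1_add_bounded[OF L(3) sets_marg(3) F(3) B(3)]
  have sum_eq: "pair_sum (\<lambda>p. f12 p + ereal (h12 p)) (\<lambda>p. f13 p + ereal (h13 p)) (\<lambda>p. f23 p + ereal (h23 p)) x
      = pair_sum f12 f13 f23 x + ereal (pair_sum h12 h13 h23 x)" for x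
    by (simp add: pair_sum_def ac_simps)
  have "pair_sum (\<lambda>p. f12 p + ereal (h12 p)) (\<lambda>p. f13 p + ereal (h13 p)) (\<lambda>p. f23 p + ereal (h23 p)) x
      \<le> cost x" if "x \<in> pos3" for x
  proof (cases "x = x0")
    case False
    then have "pair_sum f12 f13 f23 x + ereal (pair_sum h12 h13 h23 x) \<le> pair_sum f12 f13 f23 x + 0"
      using nonpos by (intro add_left_mono) simp
    also have "\<dots> \<le> cost x"
      using pair_sum_le_cost[OF adm that] by simp
    finally show ?thesis by (simp only: sum_eq)
  qed (use at_x0 sum_eq in simp)
  then show "dual_admissible M (\<lambda>p. f12 p + ereal (h12 p)) (\<lambda>p. f13 p + ereal (h13 p)) (\<lambda>p. f23 p + ereal (h23 p))"
    using L12(1) L13(1) L23(1) by (auto simp: dual_admissible_def pair_sum_def)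
  have "integrable M (\<lambda>x. h12 (pr12 x))" "integrable M (\<lambda>x. h13 (pr13 x))" "integrable M (\<lambda>x. h23 (pr23 x))"
    using B M(2) by (auto intro!: integrable_const_bound[where B=B] borel_measurable_discrete)
  then have "integral\<^sup>L M (pair_sum h12 h13 h23)
      = integral\<^sup>L M (\<lambda>x. h12 (pr12 x)) + integral\<^sup>L M (\<lambda>x. h13 (pr13 x)) + integral\<^sup>L M (\<lambda>x. h23 (pr23 x))"
    unfolding pair_sum_def by simp
  then show "dual_value M (\<lambda>p. f12 p + ereal (h12 p)) (\<lambda>p. f13 p + ereal (h13 p)) (\<lambda>p. f23 p + ereal (h23 p))
      = dual_value M f12 f13 f23 + integral\<^sup>L M (pair_sum h12 h13 h23)"
    unfolding dual_value_def L12(2) L13(2) L23(2) integral_marg[OF M(2)] by simp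
qed

lemma integral_lower_bound_three_points:
  fixes H :: "'a \<Rightarrow> real"
  assumes M: "finite_measure M" "sets M = UNIV"
    and K: "0 \<le> K" "\<And>x. - K \<le> H x"
    and H: "H x0 = t" "- (t/2) \<le> H y1" "- (t/2) \<le> H y2" "integrable M H"
    and distinct: "x0 \<noteq> y1" "x0 \<noteq> y2" "y1 \<noteq> y2"
    and neg: "\<And>x. H x < 0 \<Longrightarrow> x \<notin> {x0, y1, y2} \<Longrightarrow> x \<in> Q"
  shows "t * measure M {x0} - (t/2) * measure M {y1} - (t/2) * measure M {y2} - K * measure M Q
    \<le> integral\<^sup>L M H"
proof -
  interpret finite_measure M by (rule M(1))
  have fin: "emeasure M X < top" for X
    by (simp add: less_top[symmetric])
  define L where "L x = t * indicator {x0} x - (t/2) * indicator {y1} x - (t/2) * indicator {y2} x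
       - K * indicator Q x" for x
  have "L x \<le> H x" for x
  proof -
    consider "x = x0" | "x = y1" | "x = y2" | "x \<notin> {x0, y1, y2}" by blast
    then show ?thesis
    proof cases
      case 4
      then show ?thesis
        using neg[of x] K by (cases "H x < 0") (auto simp: L_def indicator_def)
    qed (use distinct K H in \<open>auto simp: L_def indicator_def\<close>)
  qed
  moreover have "integrable M L"
    using M(2) fin unfolding L_def
    by (intro Bochner_Integration.integrable_diff integrable_mult_right integrable_real_indicator) auto
  ultimately have "integral\<^sup>L M L \<le> integral\<^sup>L M H"
    using H(4) by (intro integral_mono)
  moreover have "integral\<^sup>L M L = t * measure M {x0} - (t/2) * measure M {y1} - (t/2) * measure M {y2}
      - K * measure M Q"
    using M(2) fin unfolding L_def by (simp add: Bochner_Integration.integral_diff integrable_real_indicator)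
  ultimately show ?thesis by simp
qed

definition outside_A :: "(nat \<times> nat \<times> nat) set" where
  "outside_A = {x. \<forall>m\<ge>1. x \<notin> A m}"

lemma measure_beyond_outside_A: "measure mu (beyond N \<inter> outside_A) \<le> alpha0 * (6 * (1/2)^N)"
proof -
  have "emeasure mu (beyond N \<inter> outside_A)
      \<le> (\<integral>\<^sup>+x. ennreal alpha0 * (ennreal (weps x) * indicator (beyond N) x) \<partial>count_space UNIV)"
    unfolding emeasure_mu
  proof (intro nn_integral_mono)
    fix x
    show "ennreal (wmix x) * indicator (beyond N \<inter> outside_A) x
        \<le> ennreal alpha0 * (ennreal (weps x) * indicator (beyond N) x)"
    proof (cases "x \<in> outside_A")
      case True
      then have "wp x = 0" by (intro wp_outside_A) (auto simp: outside_A_def)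
      then show ?thesis using alpha0_pos weps_nonneg
        by (auto simp: wmix_def indicator_def ennreal_mult)
    qed simp
  qed
  also have "\<dots> \<le> ennreal alpha0 * ennreal (6 * (1/2)^N)"
    by (simp add: nn_integral_cmult nn_integral_weps_beyond mult_left_mono)
  also have "\<dots> = ennreal (alpha0 * (6 * (1/2)^N))"
    using alpha0_pos by (simp add: ennreal_mult)
  finally show ?thesis
    unfolding measure_def by (intro enn2real_leI) (use alpha0_pos in auto)
qed

lemma cube_le_pow2: "(n+1)^3 \<le> 8 * 2^n" for n :: nat
proof (induction n rule: less_induct)
  case (less n)
  show ?case
  proof (cases "n \<le> 4")
    case True
    then have "n = 0 \<or> n = 1 \<or> n = 2 \<or> n = 3 \<or> n = 4" by auto
    then show ?thesis by (elim disjE) (simp_all add: power3_eq_cube)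
  next
    case False
    then obtain k where k: "n = Suc k" "4 \<le> k" by (cases n) auto
    have "(k+2)^3 = k^3 + 6*k^2 + 12*k + 8"
      by (simp add: power3_eq_cube power2_eq_square algebra_simps)
    moreover have "2*(k+1)^3 = 2*k^3 + 6*k^2 + 6*k + 2"
      by (simp add: power3_eq_cube power2_eq_square algebra_simps)
    moreover have "4*k^2 \<le> k^3" "4*k \<le> k^2"
      using k(2) by (simp_all add: power3_eq_cube power2_eq_square)
    ultimately have "(n+1)^3 \<le> 2 * (k+1)^3"
      using k by simp
    also have "\<dots> \<le> 2 * (8 * 2^k)"
      using less[of k] k by simp
    finally show ?thesis using k by simp
  qed
qed

lemma inverse_square_decrement:
  fixes x :: real
  assumes "1 \<le> x"
  shows "1/(x+1)^3 \<le> 1/x^2 - 1/(x+1)^2"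
proof -
  have "(x+1)^3 = x^2 * (x+2) + (x^2 + 3*x + 1)"
    by (simp add: power2_eq_square power3_eq_cube algebra_simps)
  then have "x^2 * (x + 2) \<le> (x+1)^3"
    using assms by simp
  then have "(x+2)/(x+1)^3 \<le> 1/x^2"
    using assms by (simp add: divide_simps mult.commute)
  moreover have "1/(x+1)^3 + 1/(x+1)^2 = (x+2)/(x+1)^3"
    using assms by (simp add: power3_eq_cube power2_eq_square divide_simps)
  ultimately show ?thesis by simp
qed

lemma pi_squared_bounds: "9 \<le> pi^2" "pi^2 \<le> 16"
proof -
  have "3 * 3 \<le> pi * pi" "pi * pi \<le> 4 * 4"
    using pi_gt3 pi_less_4 by (intro mult_mono; simp)+
  then show "9 \<le> pi^2" "pi^2 \<le> 16"
    by (simp_all add: power2_eq_square)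
qed

lemma pmass_decrement:
  assumes "1 \<le> n"
  shows "1 / (64 * 2^n) \<le> pmass n - pmass (n+1)"
proof -
  have "real ((n+1)^3) \<le> real (8 * 2^n)"
    using cube_le_pow2[of n] by linarith
  then have "1 / (8 * 2^n) \<le> 1 / real (n+1)^3"
    by (intro divide_left_mono) auto
  also have "\<dots> \<le> 1 / real n ^ 2 - 1 / real (n+1) ^ 2"
    using inverse_square_decrement[of "real n"] assms by (simp add: add.commute)
  finally have d: "1 / (8 * 2^n) \<le> 1 / real n ^ 2 - 1 / real (n+1) ^ 2" .
  have "1/8 \<le> 2/pi^2"
    using pi_squared_bounds by (simp add: divide_simps)
  then have "(1/8) * (1 / (8 * 2^n)) \<le> (2/pi^2) * (1 / real n ^ 2 - 1 / real (n+1) ^ 2)"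
    using d by (intro mult_mono) auto
  also have "\<dots> = pmass n - pmass (n+1)"
    by (simp add: pmass_def power_mult_distrib right_diff_distrib)
  finally show ?thesis by simp
qed

text \<open>The mass gained at a point of \<open>A n\<close> exceeds what is lost at two points of \<open>A (n+1)\<close>
  and on the set \<open>beyond (n+1) \<inter> outside_A\<close>, where only \<open>\<mu>\<^sub>\<epsilon>\<close> lives.\<close>
lemma bump_gain:
  assumes n: "1 \<le> n" and x0: "x0 \<in> A n" and ya: "ya \<in> A (n+1)" and yb: "yb \<in> A (n+1)"
  shows "0 < wmix x0 - wmix ya / 2 - wmix yb / 2 - 3/2 * (alpha0 * (6 * (1/2)^(n+1)))"
proof -
  have e: "3*(n+1)+1 = 3*n+4" by simp
  have wy: "wmix ya = (1 - alpha0) * pmass (n+1) + alpha0 * (1/2)^(3*n+4)"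
    "wmix yb = (1 - alpha0) * pmass (n+1) + alpha0 * (1/2)^(3*n+4)"
    unfolding e[symmetric] by (rule wmix_A[OF _ ya] wmix_A[OF _ yb], simp)+
  have "alpha0 * (1/2)^(3*n+4) \<le> alpha0 * (1/2)^n"
    using alpha0_pos by (intro mult_left_mono power_decreasing) auto
  then have "alpha0 * (1/2)^(3*n+4) + 3/2 * (alpha0 * (6 * (1/2)^(n+1))) \<le> (11/2) * alpha0 * (1/2)^n"
    by simp
  also have "\<dots> < (1 - alpha0) * (1 / (64 * 2^n))"
    by (simp add: alpha0_def power_one_over divide_simps)
  also have "\<dots> \<le> (1 - alpha0) * (pmass n - pmass (n+1))"
    using alpha0_less_1 by (intro mult_left_mono pmass_decrement n) simp
  finally show ?thesis
    using wy pmass_le_wmix[OF n x0] by (simp add: algebra_simps)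
qed

lemma pair_sum_real_of_ereal:
  assumes adm: "dual_admissible mu f12 f13 f23" and x: "x \<in> pos3"
  shows "pair_sum f12 f13 f23 x
    = ereal (pair_sum (\<lambda>p. real_of_ereal (f12 p)) (\<lambda>p. real_of_ereal (f13 p)) (\<lambda>p. real_of_ereal (f23 p)) x)"
proof -
  obtain a b c where x_eq: "x = (a,b,c)" by (cases x)
  then have pos: "1 \<le> a" "1 \<le> b" "1 \<le> c" using x by (auto simp: pos3_def)
  have L: "ereal_L1 (marg12 mu) f12" "ereal_L1 (marg13 mu) f13" "ereal_L1 (marg23 mu) f23"
    using adm by (auto simp: dual_admissible_def)
  have "\<bar>f12 (a,b)\<bar> \<noteq> \<infinity>" "\<bar>f13 (a,c)\<bar> \<noteq> \<infinity>" "\<bar>f23 (b,c)\<bar> \<noteq> \<infinity>"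
    using pos by (intro ereal_L1_finite_at_atom[OF L(1) sets_marg(1)] ereal_L1_finite_at_atom[OF L(2) sets_marg(2)]
        ereal_L1_finite_at_atom[OF L(3) sets_marg(3)] emeasure_marg_singleton_pos; simp)+
  then show ?thesis by (auto simp: x_eq pair_sum_def real_of_ereal_add)
qed

text \<open>The admissible shape of the change \<open>H\<close> of the dual sum under a perturbation that raises it
  at \<open>x0 \<in> A n\<close>; such a change has positive \<open>\<mu>\<close>-integral (\<open>integral_improving_bump_pos\<close>).\<close>
definition improving_bump :: "nat \<Rightarrow> real \<Rightarrow> nat \<times> nat \<times> nat \<Rightarrow> nat \<times> nat \<times> nat \<Rightarrow> nat \<times> nat \<times> nat \<Rightarrow>
    (nat \<times> nat \<times> nat \<Rightarrow> real) \<Rightarrow> bool" where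
  "improving_bump n t x0 ya yb H \<longleftrightarrow>
     H x0 = t \<and> (\<forall>x. x \<noteq> x0 \<longrightarrow> H x \<le> 0) \<and> (\<forall>x. - (3/2 * t) \<le> H x) \<and>
     - (t/2) \<le> H ya \<and> - (t/2) \<le> H yb \<and>
     (\<forall>x. H x < 0 \<longrightarrow> x \<notin> {ya, yb} \<longrightarrow> x \<in> beyond (n+1) \<inter> outside_A)"

lemma integral_improving_bump_pos:
  assumes n: "1 \<le> n" and x0: "x0 \<in> A n" and ya: "ya \<in> A (n+1)" and yb: "yb \<in> A (n+1)" and "ya \<noteq> yb"
    and t: "0 < t" and H: "improving_bump n t x0 ya yb H" and "integrable mu H"
  shows "0 < integral\<^sup>L mu H"
proof -
  have H_x0: "H x0 = t" and H_ge: "\<And>x. - (3/2 * t) \<le> H x" and H_y: "- (t/2) \<le> H ya" "- (t/2) \<le> H yb"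
    and H_neg: "\<And>x. H x < 0 \<Longrightarrow> x \<notin> {ya, yb} \<Longrightarrow> x \<in> beyond (n+1) \<inter> outside_A"
    using H unfolding improving_bump_def by (simp_all del: split_paired_All)
  have "x0 \<noteq> ya" "x0 \<noteq> yb"
    using A_inj[of x0 n "n+1"] x0 ya yb by auto
  then have "t * measure mu {x0} - (t/2) * measure mu {ya} - (t/2) * measure mu {yb}
      - (3/2 * t) * measure mu (beyond (n+1) \<inter> outside_A) \<le> integral\<^sup>L mu H"
    using t \<open>ya \<noteq> yb\<close> H_x0 H_ge H_y H_neg \<open>integrable mu H\<close>
    by (intro integral_lower_bound_three_points[OF finite_measure_mu sets_mu]) auto
  moreover have "0 < t * (wmix x0 - wmix ya / 2 - wmix yb / 2 - 3/2 * (alpha0 * (6 * (1/2)^(n+1))))"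
    using bump_gain[OF n x0 ya yb] t by simp
  moreover have "(3/2 * t) * measure mu (beyond (n+1) \<inter> outside_A) \<le> (3/2 * t) * (alpha0 * (6 * (1/2)^(n+1)))"
    using t by (intro mult_left_mono measure_beyond_outside_A) auto
  ultimately show ?thesis
    unfolding measure_mu_singleton by (simp add: algebra_simps)
qed

text \<open>A maximizer is tight at \<open>x0\<close>: otherwise adding a bump of height \<open>t\<close> (the slack at \<open>x0\<close>)
  keeps the tuple admissible and increases the dual value.\<close>
lemma dual_maximizer_tight:
  assumes max: "dual_maximizer mu f12 f13 f23"
    and n: "1 \<le> n" and x0: "x0 \<in> A n" and ya: "ya \<in> A (n+1)" and yb: "yb \<in> A (n+1)" and "ya \<noteq> yb"
    and bounded: "\<And>t p. 0 < t \<Longrightarrow> \<bar>h12 t p\<bar> \<le> t \<and> \<bar>h13 t p\<bar> \<le> t \<and> \<bar>h23 t p\<bar> \<le> t"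
    and bump: "\<And>t. 0 < t \<Longrightarrow> improving_bump n t x0 ya yb (pair_sum (h12 t) (h13 t) (h23 t))"
  shows "pair_sum f12 f13 f23 x0 = 1"
proof (rule ccontr)
  assume not_tight: "pair_sum f12 f13 f23 x0 \<noteq> 1"
  have adm: "dual_admissible mu f12 f13 f23" using max by (simp add: dual_maximizer_def)
  have x0_pos: "x0 \<in> pos3" and cost_x0: "cost x0 = 1"
    using n x0 A_subset_pos3 by (auto simp: cost_def)
  define r where "r = pair_sum (\<lambda>p. real_of_ereal (f12 p)) (\<lambda>p. real_of_ereal (f13 p)) (\<lambda>p. real_of_ereal (f23 p)) x0"
  have f_x0: "pair_sum f12 f13 f23 x0 = ereal r"
    unfolding r_def by (rule pair_sum_real_of_ereal[OF adm x0_pos])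
  then have "r < 1"
    using pair_sum_le_cost[OF adm x0_pos] cost_x0 not_tight by (simp add: one_ereal_def)
  define t where "t = 1 - r"
  then have t: "0 < t" using \<open>r < 1\<close> by simp
  let ?H = "pair_sum (h12 t) (h13 t) (h23 t)"
  have H: "improving_bump n t x0 ya yb ?H"
    using bump[OF t] .
  then have "?H x0 = t" and H_nonpos: "\<And>x. x \<noteq> x0 \<Longrightarrow> ?H x \<le> 0"
    unfolding improving_bump_def by (simp_all del: split_paired_All)
  then have at_x0: "pair_sum f12 f13 f23 x0 + ereal (?H x0) \<le> cost x0"
    using f_x0 cost_x0 by (simp add: t_def)
  have B: "\<And>p. \<bar>h12 t p\<bar> \<le> t" "\<And>p. \<bar>h13 t p\<bar> \<le> t" "\<And>p. \<bar>h23 t p\<bar> \<le> t"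
    using bounded[OF t] by auto
  note improved = dual_admissible_add_bounded[OF adm finite_measure_mu sets_mu B at_x0 H_nonpos]
  have "\<bar>?H x\<bar> \<le> 3 * t" for x
    using B(1)[of "pr12 x"] B(2)[of "pr13 x"] B(3)[of "pr23 x"] unfolding pair_sum_def by linarith
  then have "integrable mu ?H"
    by (intro finite_measure.integrable_const_bound[OF finite_measure_mu, where B="3 * t"])
      (simp_all add: borel_measurable_discrete)
  then have "dual_value mu f12 f13 f23 < dual_value mu (\<lambda>p. f12 p + ereal (h12 t p))
      (\<lambda>p. f13 p + ereal (h13 t p)) (\<lambda>p. f23 p + ereal (h23 t p))"
    using improved(2) integral_improving_bump_pos[OF n x0 ya yb \<open>ya \<noteq> yb\<close> t H] by simp
  moreover have "dual_value mu (\<lambda>p. f12 p + ereal (h12 t p)) (\<lambda>p. f13 p + ereal (h13 t p))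
      (\<lambda>p. f23 p + ereal (h23 t p)) \<le> dual_value mu f12 f13 f23"
    using max improved(1) by (simp add: dual_maximizer_def)
  ultimately show False by simp
qed

lemma improving_bump_comp:
  assumes H: "improving_bump n t (\<pi> x0) (\<pi> ya) (\<pi> yb) H" and "inj \<pi>"
    and invariant: "\<And>x. \<pi> x \<in> beyond (n+1) \<inter> outside_A \<Longrightarrow> x \<in> beyond (n+1) \<inter> outside_A"
  shows "improving_bump n t x0 ya yb (H \<circ> \<pi>)"
proof -
  have H_x0: "H (\<pi> x0) = t" and H_nonpos: "\<And>x. x \<noteq> \<pi> x0 \<Longrightarrow> H x \<le> 0"
    and H_ge: "\<And>x. - (3/2 * t) \<le> H x" and H_y: "- (t/2) \<le> H (\<pi> ya)" "- (t/2) \<le> H (\<pi> yb)"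
    and H_neg: "\<And>x. H x < 0 \<Longrightarrow> x \<notin> {\<pi> ya, \<pi> yb} \<Longrightarrow> x \<in> beyond (n+1) \<inter> outside_A"
    using H unfolding improving_bump_def by (simp_all del: split_paired_All)
  have "(H \<circ> \<pi>) x \<le> 0" if "x \<noteq> x0" for x
  proof -
    have "\<pi> x \<noteq> \<pi> x0" using that \<open>inj \<pi>\<close> by (auto dest: injD)
    then show ?thesis using H_nonpos by simp
  qed
  moreover have "x \<in> beyond (n+1) \<inter> outside_A" if "(H \<circ> \<pi>) x < 0" "x \<notin> {ya, yb}" for x
  proof -
    have "\<pi> x \<notin> {\<pi> ya, \<pi> yb}" using that(2) \<open>inj \<pi>\<close> by (auto dest: injD)
    with that(1) have "\<pi> x \<in> beyond (n+1) \<inter> outside_A" by (intro H_neg) simp_all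
    then show ?thesis by (rule invariant)
  qed
  ultimately show ?thesis
    using H_x0 H_ge H_y unfolding improving_bump_def by (simp del: split_paired_All)
qed

lemma beyond_outside_A_permute:
  "(case x of (a,b,c) \<Rightarrow> (b,c,a)) \<in> beyond N \<inter> outside_A \<Longrightarrow> x \<in> beyond N \<inter> outside_A"
  "(case x of (a,b,c) \<Rightarrow> (a,c,b)) \<in> beyond N \<inter> outside_A \<Longrightarrow> x \<in> beyond N \<inter> outside_A"
  by (cases x; auto simp: beyond_def outside_A_def mem_A_iff)+

definition col_bump :: "nat \<Rightarrow> real \<Rightarrow> nat \<times> nat \<Rightarrow> real" where
  "col_bump n t p =
    (if snd p = n+1 then (if fst p = n then t/2 else if fst p = n+2 then 0 else - (t/2)) else 0)"

definition row_bump :: "nat \<Rightarrow> real \<Rightarrow> nat \<times> nat \<Rightarrow> real" where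
  "row_bump n t p = col_bump n t (snd p, fst p)"

definition corner_dip :: "nat \<Rightarrow> real \<Rightarrow> nat \<times> nat \<Rightarrow> real" where
  "corner_dip n t p = (if p = (n, n+2) \<or> p = (n+2, n) then - (t/2) else 0)"

text \<open>The bump raises the dual sum by \<open>t\<close> at \<open>(n, n, n+1)\<close>. The compensating negative values
  sit at points with a coordinate \<open>\<ge> n+1\<close>; apart from \<open>(n+2, n+1, n+1)\<close> and \<open>(n+1, n+2, n+1)\<close>
  none of them lies in some \<open>A m\<close>.\<close>
definition bump :: "nat \<Rightarrow> real \<Rightarrow> nat \<times> nat \<times> nat \<Rightarrow> real" where
  "bump n t = pair_sum (corner_dip n t) (col_bump n t) (col_bump n t)"

lemma bump_eq: "bump n t (a,b,c) = corner_dip n t (a,b) + col_bump n t (a,c) + col_bump n t (b,c)"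
  by (simp add: bump_def pair_sum_def)

lemma abs_bumps_le:
  "0 \<le> t \<Longrightarrow> \<bar>col_bump n t p\<bar> \<le> t" "0 \<le> t \<Longrightarrow> \<bar>row_bump n t p\<bar> \<le> t" "0 \<le> t \<Longrightarrow> \<bar>corner_dip n t p\<bar> \<le> t"
  by (auto simp: col_bump_def row_bump_def corner_dip_def)

lemma improving_bump_bump:
  assumes t: "0 < t"
  shows "improving_bump n t (n, n, n+1) (n+2, n+1, n+1) (n+1, n+2, n+1) (bump n t)"
proof -
  have nonpos: "bump n t x \<le> 0" if "x \<noteq> (n, n, n+1)" for x
  proof -
    obtain a b c where x: "x = (a,b,c)" by (cases x)
    show ?thesis
    proof (cases "c = n+1")
      case True
      with that x have "a \<noteq> n \<or> b \<noteq> n" by auto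
      with True t show ?thesis
        unfolding x bump_eq col_bump_def corner_dip_def
        by (cases "a = n"; cases "b = n"; cases "a = n+2"; cases "b = n+2") auto
    qed (use t in \<open>simp add: x bump_eq col_bump_def corner_dip_def\<close>)
  qed
  have ge: "- (3/2 * t) \<le> bump n t x" for x
    using t by (cases x) (simp add: bump_eq col_bump_def corner_dip_def)
  have neg: "x \<in> beyond (n+1) \<inter> outside_A"
    if neg: "bump n t x < 0" and y: "x \<notin> {(n+2, n+1, n+1), (n+1, n+2, n+1)}" for x
  proof -
    obtain a b c where x: "x = (a,b,c)" by (cases x)
    have "x \<in> beyond (n+1)"
    proof (rule ccontr)
      assume "x \<notin> beyond (n+1)"
      then have "a \<le> n" "b \<le> n" "c \<le> n" by (auto simp: x beyond_def)
      then show False using neg by (simp add: x bump_eq col_bump_def corner_dip_def)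
    qed
    moreover have False if "1 \<le> m" "x \<in> A m" for m
      using that neg y t unfolding x
      by (cases "m = n+1"; cases "m = n")
        (auto simp: mem_A_iff bump_eq col_bump_def corner_dip_def split: if_splits)
    ultimately show ?thesis by (auto simp: outside_A_def)
  qed
  have "bump n t (n, n, n+1) = t" "- (t/2) \<le> bump n t (n+2, n+1, n+1)" "- (t/2) \<le> bump n t (n+1, n+2, n+1)"
    by (simp_all add: bump_eq col_bump_def corner_dip_def)
  with nonpos ge neg show ?thesis
    unfolding improving_bump_def by blast
qed

lemma dual_maximizer_tight_A:
  assumes max: "dual_maximizer mu f12 f13 f23" and n: "1 \<le> n"
  shows "pair_sum f12 f13 f23 (n, n, n+1) = 1" "pair_sum f12 f13 f23 (n+1, n, n) = 1"
    "pair_sum f12 f13 f23 (n, n+1, n) = 1"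
proof -
  have inj: "inj (\<lambda>(a::nat, b::nat, c::nat). (b,c,a))" "inj (\<lambda>(a::nat, b::nat, c::nat). (a,c,b))"
    by (auto simp: inj_def)
  have rotate: "improving_bump n t (n+1, n, n) (n+1, n+2, n+1) (n+1, n+1, n+2)
      (pair_sum (row_bump n t) (row_bump n t) (corner_dip n t))" if "0 < t" for t
  proof -
    have "improving_bump n t ((\<lambda>(a,b,c). (b,c,a)) (n+1, n, n)) ((\<lambda>(a,b,c). (b,c,a)) (n+1, n+2, n+1))
        ((\<lambda>(a,b,c). (b,c,a)) (n+1, n+1, n+2)) (bump n t)"
      using improving_bump_bump[OF that, of n] by simp
    then have "improving_bump n t (n+1, n, n) (n+1, n+2, n+1) (n+1, n+1, n+2) (bump n t \<circ> (\<lambda>(a,b,c). (b,c,a)))"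
      by (rule improving_bump_comp[OF _ inj(1)]) (rule beyond_outside_A_permute(1))
    moreover have "bump n t \<circ> (\<lambda>(a,b,c). (b,c,a)) = pair_sum (row_bump n t) (row_bump n t) (corner_dip n t)"
      by (auto simp: fun_eq_iff pair_sum_def bump_eq row_bump_def)
    ultimately show ?thesis by simp
  qed
  have swap: "improving_bump n t (n, n+1, n) (n+2, n+1, n+1) (n+1, n+1, n+2)
      (pair_sum (col_bump n t) (corner_dip n t) (row_bump n t))" if "0 < t" for t
  proof -
    have "improving_bump n t ((\<lambda>(a,b,c). (a,c,b)) (n, n+1, n)) ((\<lambda>(a,b,c). (a,c,b)) (n+2, n+1, n+1))
        ((\<lambda>(a,b,c). (a,c,b)) (n+1, n+1, n+2)) (bump n t)"
      using improving_bump_bump[OF that, of n] by simp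
    then have "improving_bump n t (n, n+1, n) (n+2, n+1, n+1) (n+1, n+1, n+2) (bump n t \<circ> (\<lambda>(a,b,c). (a,c,b)))"
      by (rule improving_bump_comp[OF _ inj(2)]) (rule beyond_outside_A_permute(2))
    moreover have "bump n t \<circ> (\<lambda>(a,b,c). (a,c,b)) = pair_sum (col_bump n t) (corner_dip n t) (row_bump n t)"
      by (auto simp: fun_eq_iff pair_sum_def bump_eq row_bump_def)
    ultimately show ?thesis by simp
  qed
  show "pair_sum f12 f13 f23 (n, n, n+1) = 1"
    by (rule dual_maximizer_tight[OF max n, of "(n, n, n+1)" "(n+2, n+1, n+1)" "(n+1, n+2, n+1)"
        "corner_dip n" "col_bump n" "col_bump n"])
      (use improving_bump_bump abs_bumps_le in \<open>auto simp: mem_A_iff bump_def\<close>)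
  show "pair_sum f12 f13 f23 (n+1, n, n) = 1"
    by (rule dual_maximizer_tight[OF max n, of "(n+1, n, n)" "(n+1, n+2, n+1)" "(n+1, n+1, n+2)"
        "row_bump n" "row_bump n" "corner_dip n"])
      (use rotate abs_bumps_le in \<open>auto simp: mem_A_iff\<close>)
  show "pair_sum f12 f13 f23 (n, n+1, n) = 1"
    by (rule dual_maximizer_tight[OF max n, of "(n, n+1, n)" "(n+2, n+1, n+1)" "(n+1, n+1, n+2)"
        "col_bump n" "corner_dip n" "row_bump n"])
      (use swap abs_bumps_le in \<open>auto simp: mem_A_iff\<close>)
qed

section \<open>No dual maximizer\<close>

lemma pair_sum_cube:
  fixes f12 f13 f23 :: "nat \<times> nat \<Rightarrow> 'b::comm_monoid_add"
  shows "pair_sum f12 f13 f23 (a',b,c) + pair_sum f12 f13 f23 (a,b',c) + pair_sum f12 f13 f23 (a,b,c')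
      + pair_sum f12 f13 f23 (a',b',c')
    = pair_sum f12 f13 f23 (a,b,c) + pair_sum f12 f13 f23 (a,b',c') + pair_sum f12 f13 f23 (a',b,c')
      + pair_sum f12 f13 f23 (a',b',c)"
  by (simp add: pair_sum_def ac_simps)

lemma coordinate_sum_A: "(a,b,c) \<in> A m \<Longrightarrow> a + b + c = 3*m+1"
  by (auto simp: A_def)

lemma dual_maximizer_diagonal_bound:
  assumes max: "dual_maximizer mu f12 f13 f23" and "1 \<le> n"
  shows "real_of_ereal (f12 (n,n)) + real_of_ereal (f13 (n,n)) + real_of_ereal (f23 (n,n)) \<le> - 3 * (real n - 1)"
  using \<open>1 \<le> n\<close>
proof (induction n rule: dec_induct)
  have adm: "dual_admissible mu f12 f13 f23"
    using max by (simp add: dual_maximizer_def)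
  define G where "G = pair_sum (\<lambda>p. real_of_ereal (f12 p)) (\<lambda>p. real_of_ereal (f13 p)) (\<lambda>p. real_of_ereal (f23 p))"
  have G_outside_A: "G (a,b,c) \<le> 0" if "1 \<le> a" "1 \<le> b" "1 \<le> c" "(a + b + c) mod 3 \<noteq> 1" for a b c
  proof -
    have "(a,b,c) \<in> pos3" using that by (simp add: pos3_def)
    moreover have "cost (a,b,c) = 0"
      using that coordinate_sum_A by (fastforce simp: cost_def)
    ultimately show ?thesis
      using pair_sum_le_cost[OF adm] pair_sum_real_of_ereal[OF adm] by (fastforce simp: G_def)
  qed
  {
    case base
    show ?case using G_outside_A[of 1 1 1] by (simp add: G_def pair_sum_def)
  next
    case (step k)
    have "ereal (G x) = 1" if "x \<in> {(k+1,k,k), (k,k+1,k), (k,k,k+1)}" for x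
      using that dual_maximizer_tight_A[OF max step.hyps(1)] pair_sum_real_of_ereal[OF adm, of x]
        A_subset_pos3[OF step.hyps(1)] by (auto simp: G_def mem_A_iff)
    then have "G (k+1,k,k) = 1" "G (k,k+1,k) = 1" "G (k,k,k+1) = 1"
      by (simp_all add: one_ereal_def)
    moreover have "G (k,k+1,k+1) \<le> 0" "G (k+1,k,k+1) \<le> 0" "G (k+1,k+1,k) \<le> 0"
      using step.hyps(1) by (intro G_outside_A; simp; presburger)+
    moreover have "G (k,k,k) \<le> - 3 * (real k - 1)"
      using step.IH by (simp add: G_def pair_sum_def)
    moreover have "G (k+1,k,k) + G (k,k+1,k) + G (k,k,k+1) + G (k+1,k+1,k+1)
        = G (k,k,k) + G (k,k+1,k+1) + G (k+1,k,k+1) + G (k+1,k+1,k)"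
      unfolding G_def by (rule pair_sum_cube)
    ultimately have "G (k+1,k+1,k+1) \<le> - 3 * (real (k+1) - 1)"
      by simp
    then show ?case by (simp add: G_def pair_sum_def)
  }
qed

lemma summable_ereal_L1_at_points:
  fixes f :: "'a \<Rightarrow> ereal" and p :: "nat \<Rightarrow> 'a"
  assumes L: "ereal_L1 M f" and S: "sets M = UNIV" and "inj p"
    and m: "\<And>n. 0 \<le> m n" "\<And>n. ennreal (m n) \<le> emeasure M {p n}"
  shows "summable (\<lambda>n. \<bar>real_of_ereal (f (p n))\<bar> * m n)"
proof (rule summableI_nonneg_bounded)
  let ?I = "\<integral>\<^sup>+x. e2ennreal \<bar>f x\<bar> \<partial>M"
  show "0 \<le> \<bar>real_of_ereal (f (p n))\<bar> * m n" for n
    by (intro mult_nonneg_nonneg abs_ge_zero m)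
  show "(\<Sum>i<N. \<bar>real_of_ereal (f (p i))\<bar> * m i) \<le> enn2real ?I" for N
  proof -
    have "ennreal (\<Sum>i<N. \<bar>real_of_ereal (f (p i))\<bar> * m i)
        = (\<Sum>i<N. ennreal (\<bar>real_of_ereal (f (p i))\<bar> * m i))"
      by (rule sum_ennreal[symmetric]) (intro mult_nonneg_nonneg abs_ge_zero m)
    also have "\<dots> = (\<Sum>i<N. ennreal (norm (real_of_ereal (f (p i)))) * ennreal (m i))"
      using m by (intro sum.cong refl) (simp add: ennreal_mult real_of_ereal_pos)
    also have "\<dots> \<le> (\<Sum>i<N. e2ennreal \<bar>f (p i)\<bar> * emeasure M {p i})"
      by (intro sum_mono mult_mono ennreal_norm_real_of_ereal_le m) auto
    also have "\<dots> = (\<Sum>x\<in>p ` {..<N}. e2ennreal \<bar>f x\<bar> * emeasure M {x})"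
      using \<open>inj p\<close> by (simp add: sum.reindex inj_on_subset[OF \<open>inj p\<close>])
    also have "\<dots> = (\<integral>\<^sup>+x. e2ennreal \<bar>f x\<bar> * indicator (p ` {..<N}) x \<partial>M)"
      by (rule nn_integral_indicator_finite[symmetric]) (use S in auto)
    also have "\<dots> \<le> ?I"
      by (intro nn_integral_mono) (auto simp: indicator_def)
    finally have "ennreal (\<Sum>i<N. \<bar>real_of_ereal (f (p i))\<bar> * m i) \<le> ?I" .
    moreover have "?I < \<infinity>"
      using L by (simp add: ereal_L1_def)
    ultimately have "enn2real (ennreal (\<Sum>i<N. \<bar>real_of_ereal (f (p i))\<bar> * m i)) \<le> enn2real ?I"
      by (metis enn2real_mono infinity_ennreal_def)
    moreover have "0 \<le> (\<Sum>i<N. \<bar>real_of_ereal (f (p i))\<bar> * m i)"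
      by (intro sum_nonneg mult_nonneg_nonneg abs_ge_zero m)
    ultimately show ?thesis
      by simp
  qed
qed

lemma not_summable_linear_over_square: "\<not> summable (\<lambda>n. (real n - 1) / real n ^ 2)"
proof
  assume "summable (\<lambda>n. (real n - 1) / real n ^ 2)"
  then have "summable (\<lambda>n. 2 * ((real n - 1) / real n ^ 2))"
    by (rule summable_mult)
  then have "summable (\<lambda>n. inverse (real n))"
  proof (rule summable_comparison_test'[where N=2])
    fix n :: nat
    assume "2 \<le> n"
    then show "norm (inverse (real n)) \<le> 2 * ((real n - 1) / real n ^ 2)"
      by (simp add: field_simps power2_eq_square)
  qed
  then show False using not_summable_harmonic by blast
qed

lemma not_summable_diagonal_weights: "\<not> summable (\<lambda>n. 3 * (real n - 1) * ((1 - alpha0) * pmass n))"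
proof
  have eq: "(\<lambda>n. 3 * (real n - 1) * ((1 - alpha0) * pmass n))
      = (\<lambda>n. (6 * (1 - alpha0) / pi^2) * ((real n - 1) / real n ^ 2))"
    by (simp add: fun_eq_iff pmass_eq divide_inverse algebra_simps)
  assume "summable (\<lambda>n. 3 * (real n - 1) * ((1 - alpha0) * pmass n))"
  then have "summable (\<lambda>n. (6 * (1 - alpha0) / pi^2) * ((real n - 1) / real n ^ 2))"
    unfolding eq .
  then have "6 * (1 - alpha0) / pi^2 = 0 \<or> summable (\<lambda>n. (real n - 1) / real n ^ 2)"
    by (simp only: summable_cmult_iff)
  then show False
    using alpha0_less_1 not_summable_linear_over_square by simp
qed

lemma pmass_le_emeasure_marg_diagonal:
  "ennreal ((1 - alpha0) * pmass n) \<le> emeasure (marg12 mu) {(n,n)}"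
  "ennreal ((1 - alpha0) * pmass n) \<le> emeasure (marg13 mu) {(n,n)}"
  "ennreal ((1 - alpha0) * pmass n) \<le> emeasure (marg23 mu) {(n,n)}"
proof -
  have "(1 - alpha0) * pmass n \<le> wmix (n,n,n+1) \<and> (1 - alpha0) * pmass n \<le> wmix (n,n+1,n)
      \<and> (1 - alpha0) * pmass n \<le> wmix (n+1,n,n)"
    using pmass_le_wmix[of n] wmix_nonneg by (cases "n = 0") (simp_all add: pmass_def mem_A_iff)
  then show "ennreal ((1 - alpha0) * pmass n) \<le> emeasure (marg12 mu) {(n,n)}"
    "ennreal ((1 - alpha0) * pmass n) \<le> emeasure (marg13 mu) {(n,n)}"
    "ennreal ((1 - alpha0) * pmass n) \<le> emeasure (marg23 mu) {(n,n)}"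
    using wmix_le_emeasure_marg(1)[of n n "n+1"] wmix_le_emeasure_marg(2)[of n "n+1" n]
      wmix_le_emeasure_marg(3)[of "n+1" n n] by (meson ennreal_leI order_trans)+
qed

lemma no_dual_maximizer: "\<not> dual_maximizer mu f12 f13 f23"
proof
  assume max: "dual_maximizer mu f12 f13 f23"
  then have L: "ereal_L1 (marg12 mu) f12" "ereal_L1 (marg13 mu) f13" "ereal_L1 (marg23 mu) f23"
    by (simp_all add: dual_maximizer_def dual_admissible_def)
  define m where "m n = (1 - alpha0) * pmass n" for n
  have m_nonneg: "0 \<le> m n" for n
    using alpha0_less_1 by (simp add: m_def pmass_nonneg)
  note m_le = pmass_le_emeasure_marg_diagonal[folded m_def]
  have "inj (\<lambda>n::nat. (n,n))" by (simp add: inj_def)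
  note summable = summable_ereal_L1_at_points[OF L(1) sets_marg(1) this m_nonneg m_le(1)]
    summable_ereal_L1_at_points[OF L(2) sets_marg(2) this m_nonneg m_le(2)]
    summable_ereal_L1_at_points[OF L(3) sets_marg(3) this m_nonneg m_le(3)]
  have "summable (\<lambda>n. 3 * (real n - 1) * m n)"
  proof (rule summable_comparison_test'[where N=1])
    show "summable (\<lambda>n. \<bar>real_of_ereal (f12 (n,n))\<bar> * m n + \<bar>real_of_ereal (f13 (n,n))\<bar> * m n
        + \<bar>real_of_ereal (f23 (n,n))\<bar> * m n)"
      using summable by (intro summable_add)
    fix n :: nat
    assume "1 \<le> n"
    then have "3 * (real n - 1) \<le> \<bar>real_of_ereal (f12 (n,n))\<bar> + \<bar>real_of_ereal (f13 (n,n))\<bar>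
        + \<bar>real_of_ereal (f23 (n,n))\<bar>"
      using dual_maximizer_diagonal_bound[OF max \<open>1 \<le> n\<close>]
        abs_ge_minus_self[of "real_of_ereal (f12 (n,n))"] abs_ge_minus_self[of "real_of_ereal (f13 (n,n))"]
        abs_ge_minus_self[of "real_of_ereal (f23 (n,n))"]
      by linarith
    then have "3 * (real n - 1) * m n \<le> (\<bar>real_of_ereal (f12 (n,n))\<bar> + \<bar>real_of_ereal (f13 (n,n))\<bar>
        + \<bar>real_of_ereal (f23 (n,n))\<bar>) * m n"
      by (rule mult_right_mono) (rule m_nonneg)
    moreover have "norm (3 * (real n - 1) * m n) = 3 * (real n - 1) * m n"
      using \<open>1 \<le> n\<close> m_nonneg[of n] by simp
    ultimately show "norm (3 * (real n - 1) * m n) \<le> \<bar>real_of_ereal (f12 (n,n))\<bar> * m n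
        + \<bar>real_of_ereal (f13 (n,n))\<bar> * m n + \<bar>real_of_ereal (f23 (n,n))\<bar> * m n"
      by (simp only: distrib_right)
  qed
  then show False
    using not_summable_diagonal_weights by (simp add: m_def)
qed

section \<open>Comparison with the product of the marginals\<close>

abbreviation nu :: "(nat \<times> nat \<times> nat) measure" where
  "nu \<equiv> marg1 mu \<Otimes>\<^sub>M (marg2 mu \<Otimes>\<^sub>M marg3 mu)"

lemma sets_pair_measure_discrete:
  fixes M1 :: "'a::countable measure" and M2 :: "'b::countable measure"
  assumes "sets M1 = UNIV" "sets M2 = UNIV"
  shows "sets (M1 \<Otimes>\<^sub>M M2) = UNIV"
proof -
  have "sets (M1 \<Otimes>\<^sub>M M2) = sets (count_space UNIV \<Otimes>\<^sub>M count_space UNIV)"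
    using assms by (intro sets_pair_measure_cong) simp_all
  also have "count_space (UNIV :: 'a set) \<Otimes>\<^sub>M count_space (UNIV :: 'b set) = count_space UNIV"
    using pair_measure_countable[of "UNIV :: 'a set" "UNIV :: 'b set"] by simp
  finally show ?thesis by simp
qed

lemma emeasure_pair_measure_singleton:
  assumes "sigma_finite_measure M2" "{a} \<in> sets M1" "{b} \<in> sets M2"
  shows "emeasure (M1 \<Otimes>\<^sub>M M2) {(a,b)} = emeasure M1 {a} * emeasure M2 {b}"
proof -
  interpret sigma_finite_measure M2 by fact
  have "emeasure (M1 \<Otimes>\<^sub>M M2) ({a} \<times> {b}) = emeasure M1 {a} * emeasure M2 {b}"
    using assms by (intro emeasure_pair_measure_Times) auto
  then show ?thesis by simp
qed

lemma null_sets_discrete_iff: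
  fixes M :: "'a::countable measure"
  assumes "sets M = UNIV"
  shows "E \<in> null_sets M \<longleftrightarrow> (\<forall>x\<in>E. emeasure M {x} = 0)"
proof -
  have "emeasure M E = (\<integral>\<^sup>+x. emeasure M {x} \<partial>count_space E)"
    by (rule emeasure_countable_singleton) (auto simp: assms)
  then show ?thesis
    using assms by (simp add: null_sets_def nn_integral_0_iff_AE AE_count_space)
qed

lemma sets_nu: "sets nu = UNIV"
  by (simp add: sets_pair_measure_discrete)

lemma emeasure_nu_singleton:
  "emeasure nu {(a,b,c)} = emeasure (marg1 mu) {a} * (emeasure (marg2 mu) {b} * emeasure (marg3 mu) {c})"
proof -
  have fin: "sigma_finite_measure (marg2 mu)" "sigma_finite_measure (marg3 mu)"
    using finite_measure_marg[OF finite_measure_mu sets_mu]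
    by (simp_all add: finite_measure_def)
  then have "sigma_finite_measure (marg2 mu \<Otimes>\<^sub>M marg3 mu)"
    by (rule sigma_finite_pair_measure)
  with fin show ?thesis
    by (simp add: emeasure_pair_measure_singleton sets_pair_measure_discrete)
qed

lemma emeasure_marg_singleton_eq_0_iff:
  "emeasure (marg1 mu) {k} = 0 \<longleftrightarrow> k = 0" "emeasure (marg2 mu) {k} = 0 \<longleftrightarrow> k = 0"
  "emeasure (marg3 mu) {k} = 0 \<longleftrightarrow> k = 0"
proof -
  have null: "emeasure mu E = 0" if "E \<inter> pos3 = {}" for E
  proof -
    have "wmix x = 0" if "x \<in> E" for x
      using that \<open>E \<inter> pos3 = {}\<close> wmix_pos_iff[of x] wmix_nonneg[of x] by auto
    then have "(\<lambda>x. ennreal (wmix x) * indicator E x) = (\<lambda>x. 0)"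
      by (auto simp: fun_eq_iff indicator_def)
    then show ?thesis by (simp add: emeasure_mu)
  qed
  then have zero: "emeasure (marg1 mu) {0} = 0" "emeasure (marg2 mu) {0} = 0" "emeasure (marg3 mu) {0} = 0"
    unfolding emeasure_marg[OF sets_mu] by (intro null; auto simp: pos3_def pr1_def pr2_def pr3_def)+
  have "0 < wmix (k,1,1)" "0 < wmix (1,k,1)" "0 < wmix (1,1,k)" if "1 \<le> k"
    using that by (simp_all add: wmix_pos_iff pos3_def)
  then have "0 < emeasure (marg1 mu) {k}" "0 < emeasure (marg2 mu) {k}" "0 < emeasure (marg3 mu) {k}"
    if "1 \<le> k"
    using that wmix_le_emeasure_marg(4)[of k 1 1] wmix_le_emeasure_marg(5)[of 1 k 1]
      wmix_le_emeasure_marg(6)[of 1 1 k] by (meson ennreal_less_zero_iff order_less_le_trans)+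
  with zero show "emeasure (marg1 mu) {k} = 0 \<longleftrightarrow> k = 0" "emeasure (marg2 mu) {k} = 0 \<longleftrightarrow> k = 0"
    "emeasure (marg3 mu) {k} = 0 \<longleftrightarrow> k = 0"
    by (cases "k = 0"; force)+
qed

lemma equiv_measures_mu_nu: "equiv_measures mu nu"
proof -
  have "emeasure nu {x} = 0 \<longleftrightarrow> x \<notin> pos3" "emeasure mu {x} = 0 \<longleftrightarrow> x \<notin> pos3" for x
    using wmix_pos_iff[of x] wmix_nonneg[of x]
    by (cases x; auto simp: emeasure_nu_singleton emeasure_marg_singleton_eq_0_iff pos3_def
        emeasure_mu_singleton)+
  then have "emeasure nu {x} = 0 \<longleftrightarrow> emeasure mu {x} = 0" for x
    by simp
  then have "E \<in> null_sets nu \<longleftrightarrow> E \<in> null_sets mu" for E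
    unfolding null_sets_discrete_iff[OF sets_mu] null_sets_discrete_iff[OF sets_nu] by blast
  then show ?thesis
    unfolding equiv_measures_def absolutely_continuous_def by blast
qed

lemma geom_le_inverse_square: "1 \<le> k \<Longrightarrow> geom k \<le> 8 / real k ^ 2"
proof -
  assume k: "1 \<le> k"
  have "real k ^ 2 \<le> real (k+1) ^ 2"
    by (intro power_mono) auto
  also have "\<dots> \<le> real (k+1) ^ 3"
    by (intro power_increasing) auto
  also have "\<dots> \<le> 8 * 2^k"
  proof -
    have "real ((k+1)^3) \<le> real (8 * 2^k)"
      using cube_le_pow2[of k] by linarith
    then show ?thesis by simp
  qed
  finally have "real k ^ 2 \<le> 8 * 2^k" .
  then show ?thesis
    using k by (simp add: geom_def power_one_over divide_simps)
qed

lemma pmass_le_inverse_square: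
  assumes "1 \<le> k"
  shows "pmass k \<le> 1 / real k ^ 2" "pmass (k - 1) \<le> 1 / real k ^ 2"
proof -
  have pi: "2 / pi^2 \<le> 2/9"
    by (rule divide_left_mono) (use pi_squared_bounds(1) in auto)
  then have "2 / pi^2 \<le> 1"
    by linarith
  then have "pmass k \<le> 1 * inverse (real k ^ 2)"
    unfolding pmass_eq by (intro mult_right_mono) simp_all
  then show "pmass k \<le> 1 / real k ^ 2" by (simp add: inverse_eq_divide)
  show "pmass (k - 1) \<le> 1 / real k ^ 2"
  proof (cases "k = 1")
    case False
    with assms have k2: "2 \<le> real k" by simp
    have "real k ^ 2 \<le> (2 * (real k - 1))^2"
      using k2 by (intro power_mono) auto
    then have "inverse ((real k - 1)^2) \<le> 4 * inverse (real k ^ 2)"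
      using k2 by (simp add: field_simps power2_eq_square)
    then have "pmass (k - 1) \<le> (2/9) * (4 * inverse (real k ^ 2))"
      unfolding pmass_eq using assms pi by (intro mult_mono) (auto simp: of_nat_diff)
    also have "\<dots> \<le> 1 / real k ^ 2"
      using k2 by (simp add: inverse_eq_divide divide_simps)
    finally show ?thesis .
  qed (simp add: pmass_def)
qed

lemma emeasure_mu_le_inverse_square:
  assumes k: "1 \<le> k" and only: "\<And>m. m \<noteq> k - 1 \<Longrightarrow> m \<noteq> k \<Longrightarrow> A m \<inter> E = {}"
    and weps_E: "(\<integral>\<^sup>+x. ennreal (weps x) * indicator E x \<partial>count_space UNIV) = ennreal (geom k)"
  shows "emeasure mu E \<le> ennreal (14 / real k ^ 2)"
proof -
  have "emeasure mu E \<le> (\<integral>\<^sup>+x. ennreal (wp x) * indicator E x + ennreal (weps x) * indicator E x \<partial>count_space UNIV)"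
    unfolding emeasure_mu
    by (intro nn_integral_mono) (auto simp: indicator_def wmix_le wp_nonneg weps_nonneg simp flip: ennreal_plus)
  also have "\<dots> = (\<Sum>m. ennreal (pmass m) * of_nat (card (A m \<inter> E))) + ennreal (geom k)"
    by (simp add: nn_integral_add nn_integral_wp weps_E)
  also have "\<dots> = (\<Sum>m\<in>{k-1, k}. ennreal (pmass m) * of_nat (card (A m \<inter> E))) + ennreal (geom k)"
    using only by (subst suminf_finite) auto
  also have "\<dots> \<le> ennreal (pmass (k-1)) * 3 + ennreal (pmass k) * 3 + ennreal (8 / real k ^ 2)"
    using k of_nat_card_A_Int_le geom_le_inverse_square[OF k]
    by (auto intro!: add_mono mult_left_mono ennreal_leI)
  also have "\<dots> \<le> ennreal (3 / real k ^ 2) + ennreal (3 / real k ^ 2) + ennreal (8 / real k ^ 2)"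
  proof -
    have "ennreal (pmass m) * 3 \<le> ennreal (3 / real k ^ 2)" if "pmass m \<le> 1 / real k ^ 2" for m
    proof -
      have "ennreal (pmass m) * 3 = ennreal (pmass m * 3)"
        using pmass_nonneg by (simp add: ennreal_mult)
      also have "\<dots> \<le> ennreal (3 / real k ^ 2)"
        using that by (intro ennreal_leI) simp
      finally show ?thesis .
    qed
    then show ?thesis
      using pmass_le_inverse_square[OF k] by (intro add_mono order_refl)
  qed
  also have "\<dots> = ennreal (14 / real k ^ 2)"
    by (simp flip: ennreal_plus)
  finally show ?thesis .
qed

lemma A_Int_coordinate_eq_empty:
  assumes "m \<noteq> k - 1" "m \<noteq> k"
  shows "A m \<inter> pr1 -` {k} = {}" "A m \<inter> pr2 -` {k} = {}" "A m \<inter> pr3 -` {k} = {}"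
  using assms by (auto simp: A_def)

lemma emeasure_marg_singleton_le:
  assumes "1 \<le> k"
  shows "emeasure (marg1 mu) {k} \<le> ennreal (14 / real k ^ 2)"
    "emeasure (marg2 mu) {k} \<le> ennreal (14 / real k ^ 2)"
    "emeasure (marg3 mu) {k} \<le> ennreal (14 / real k ^ 2)"
proof -
  have geom_k: "(\<integral>\<^sup>+j. ennreal (geom j) * indicator {k} j \<partial>count_space UNIV) = ennreal (geom k)"
    by simp
  show "emeasure (marg1 mu) {k} \<le> ennreal (14 / real k ^ 2)"
    unfolding emeasure_marg[OF sets_mu]
    by (rule emeasure_mu_le_inverse_square[OF assms A_Int_coordinate_eq_empty(1)])
      (simp_all only: nn_integral_weps_coordinate geom_k not_False_eq_True)
  show "emeasure (marg2 mu) {k} \<le> ennreal (14 / real k ^ 2)"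
    unfolding emeasure_marg[OF sets_mu]
    by (rule emeasure_mu_le_inverse_square[OF assms A_Int_coordinate_eq_empty(2)])
      (simp_all only: nn_integral_weps_coordinate geom_k not_False_eq_True)
  show "emeasure (marg3 mu) {k} \<le> ennreal (14 / real k ^ 2)"
    unfolding emeasure_marg[OF sets_mu]
    by (rule emeasure_mu_le_inverse_square[OF assms A_Int_coordinate_eq_empty(3)])
      (simp_all only: nn_integral_weps_coordinate geom_k not_False_eq_True)
qed

lemma emeasure_nu_A_point_le:
  assumes "1 \<le> n"
  shows "emeasure nu {(n, n, n+1)} \<le> ennreal (2744 / real n ^ 4)"
proof -
  have "emeasure nu {(n, n, n+1)}
      \<le> ennreal (14 / real n ^ 2) * (ennreal (14 / real n ^ 2) * ennreal (14 / real (n+1) ^ 2))"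
    unfolding emeasure_nu_singleton using assms
    by (intro mult_mono emeasure_marg_singleton_le) auto
  also have "\<dots> = ennreal (14 / real n ^ 2 * (14 / real n ^ 2 * (14 / real (n+1) ^ 2)))"
    by (simp only: ennreal_mult[symmetric] divide_nonneg_nonneg mult_nonneg_nonneg zero_le_numeral
        zero_le_power2)
  also have "\<dots> \<le> ennreal (14 / real n ^ 2 * (14 / real n ^ 2 * 14))"
    by (intro ennreal_leI mult_left_mono) (auto simp: divide_simps)
  also have "\<dots> = ennreal (2744 / real n ^ 4)"
    by (simp add: power2_eq_square power4_eq_xxxx)
  finally show ?thesis .
qed

lemma inverse_square_le_wmix_A_point:
  assumes "1 \<le> n"
  shows "1 / (9 * real n ^ 2) \<le> wmix (n, n, n+1)"
proof -
  have "1 / (9 * real n ^ 2) \<le> (1 - alpha0) * pmass n"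
    using assms pi_squared_bounds(2) by (simp add: pmass_def alpha0_def power_mult_distrib divide_simps)
  also have "\<dots> \<le> wmix (n, n, n+1)"
    using pmass_le_wmix[OF assms] by (simp add: mem_A_iff)
  finally show ?thesis .
qed

lemma bounded_density_singleton_le:
  assumes "bounded_density M N"
  shows "\<exists>b>0. \<forall>x. {x} \<in> sets N \<longrightarrow> emeasure M {x} \<le> ennreal b * emeasure N {x}"
proof -
  obtain g a b where g: "0 < a" "a \<le> b" "g \<in> borel_measurable N" "\<forall>x\<in>space N. a \<le> g x \<and> g x \<le> b"
    and M: "M = density N (\<lambda>x. ennreal (g x))"
    using assms unfolding bounded_density_def by blast
  have "emeasure M {x} \<le> ennreal b * emeasure N {x}" if "{x} \<in> sets N" for x
  proof -
    have "emeasure M {x} = (\<integral>\<^sup>+y. ennreal (g x) * indicator {x} y \<partial>N)"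
      unfolding M using g(3) that
      by (subst emeasure_density) (auto intro!: nn_integral_cong simp: indicator_def)
    also have "\<dots> = ennreal (g x) * emeasure N {x}"
      using that by (rule nn_integral_cmult_indicator)
    also have "\<dots> \<le> ennreal b * emeasure N {x}"
      using g(4) sets.sets_into_space[OF that] by (intro mult_right_mono ennreal_leI) auto
    finally show ?thesis .
  qed
  then show ?thesis using g(1,2) by (intro exI[of _ b]) auto
qed

lemma bounded_density_singleton_ge:
  assumes "bounded_density M N"
  shows "\<exists>a>0. \<forall>x. {x} \<in> sets N \<longrightarrow> ennreal a * emeasure N {x} \<le> emeasure M {x}"
proof -
  obtain g a b where g: "0 < a" "a \<le> b" "g \<in> borel_measurable N" "\<forall>x\<in>space N. a \<le> g x \<and> g x \<le> b"
    and M: "M = density N (\<lambda>x. ennreal (g x))"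
    using assms unfolding bounded_density_def by blast
  have "ennreal a * emeasure N {x} \<le> emeasure M {x}" if "{x} \<in> sets N" for x
  proof -
    have "ennreal a * emeasure N {x} \<le> ennreal (g x) * emeasure N {x}"
      using g(4) sets.sets_into_space[OF that] by (intro mult_right_mono ennreal_leI) auto
    also have "\<dots> = (\<integral>\<^sup>+y. ennreal (g x) * indicator {x} y \<partial>N)"
      using that by (rule nn_integral_cmult_indicator[symmetric])
    also have "\<dots> = emeasure M {x}"
      unfolding M using g(3) that
      by (subst emeasure_density) (auto intro!: nn_integral_cong simp: indicator_def)
    finally show ?thesis .
  qed
  then show ?thesis using g(1) by (intro exI[of _ a]) auto
qed

lemma unif_equiv_imp_singleton_le:
  assumes "unif_equiv_measures mu nu"
  shows "\<exists>K>0. \<forall>x. emeasure mu {x} \<le> ennreal K * emeasure nu {x}"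
  using assms unfolding unif_equiv_measures_def
proof
  assume "bounded_density mu nu"
  then show ?thesis
    using bounded_density_singleton_le[of mu nu] by (simp add: sets_nu)
next
  assume "bounded_density nu mu"
  then obtain a where a: "0 < a" "\<And>x. ennreal a * emeasure mu {x} \<le> emeasure nu {x}"
    using bounded_density_singleton_ge[of nu mu] by auto
  have "emeasure mu {x} \<le> ennreal (1/a) * emeasure nu {x}" for x
  proof -
    have "emeasure mu {x} = ennreal (1/a) * (ennreal a * emeasure mu {x})"
      using a(1) by (simp add: mult.assoc[symmetric] ennreal_mult[symmetric])
    also have "\<dots> \<le> ennreal (1/a) * emeasure nu {x}"
      by (intro mult_left_mono a(2)) simp
    finally show ?thesis .
  qed
  then show ?thesis
    using a(1) by (intro exI[of _ "1/a"]) auto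
qed

lemma not_unif_equiv_measures_mu_nu: "\<not> unif_equiv_measures mu nu"
proof
  assume "unif_equiv_measures mu nu"
  then obtain K where K: "0 < K" "\<And>x. emeasure mu {x} \<le> ennreal K * emeasure nu {x}"
    using unif_equiv_imp_singleton_le by blast
  define n where "n = nat \<lceil>24696 * K\<rceil> + 1"
  have n: "1 \<le> n" "24696 * K < real n"
    unfolding n_def using real_nat_ceiling_ge[of "24696 * K"] by simp_all
  have "ennreal (1 / (9 * real n ^ 2)) \<le> emeasure mu {(n, n, n+1)}"
    unfolding emeasure_mu_singleton by (intro ennreal_leI inverse_square_le_wmix_A_point n)
  also have "\<dots> \<le> ennreal K * ennreal (2744 / real n ^ 4)"
    using K emeasure_nu_A_point_le[OF n(1)] by (intro order_trans[OF K(2)] mult_left_mono) auto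
  also have "\<dots> = ennreal (K * (2744 / real n ^ 4))"
    using K(1) by (intro ennreal_mult[symmetric]) auto
  finally have "1 / (9 * real n ^ 2) \<le> K * (2744 / real n ^ 4)"
    using K(1) by (subst (asm) ennreal_le_iff) auto
  then have "real n ^ 2 \<le> 24696 * K"
    using n(1) by (simp add: divide_simps power2_eq_square power4_eq_xxxx)
  moreover have "real n \<le> real n ^ 2"
    using n(1) by (simp add: power2_eq_square)
  ultimately show False
    using n(2) by linarith
qed

theorem mainTheorem13:
  shows "\<exists>\<alpha>0::real. 0 < \<alpha>0 \<and> \<alpha>0 < 1 \<and>
    (let \<mu> = mu_mix \<alpha>0;
         \<nu> = marg1 \<mu> \<Otimes>\<^sub>M (marg2 \<mu> \<Otimes>\<^sub>M marg3 \<mu>)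
     in equiv_measures \<mu> \<nu> \<and> \<not> unif_equiv_measures \<mu> \<nu> \<and>
        \<not> (\<exists>f12 f13 f23. dual_admissible \<mu> f12 f13 f23 \<and>
             (\<forall>g12 g13 g23. dual_admissible \<mu> g12 g13 g23 \<longrightarrow>
                dual_value \<mu> g12 g13 g23 \<le> dual_value \<mu> f12 f13 f23)))"
  using alpha0_pos alpha0_less_1 equiv_measures_mu_nu not_unif_equiv_measures_mu_nu no_dual_maximizer
  unfolding dual_maximizer_def Let_def by blast

end
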